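(* Let $q=r^2$ where $r$ is an odd prime power, and let $q-1=e_1f_1=e_2f_2$ with positive integers $e_1,f_1,e_2,f_2$. Suppose there is an integer $l\geq 2$ with $e_1\equiv 2^l \pmod{2^{l+1}}$ and $2^l\mid e_2$. Suppose further that $2e_2\mid e_1(r+1)$ and $e_1\mid e_2(r-1)$. Let $D_1=\frac{e_1}{\gcd(e_1,e_2)}$, $D_2=\frac{e_2}{\gcd(e_1,e_2)}$, let $s,t$ be integers with $1\leq s\leq D_1$, $1\leq t\leq D_2$, and put $n_1=sf_1+tf_2$. Then: (1) if both $\frac{te_1(r+1)}{2e_2}+\frac{r+1}{2}$ and $n_1$ are even, then for every $k$ with $1\leq k\leq \frac{n_1}{2}-1$ there exists a $q$-ary $[n_1,k]$ MDS self-orthogonal code; (2) if $\frac{t(r+1)e_1}{2e_2}$, $\frac{r+1}{2}$ and $n_1$ are all even, there exists a $q$-ary MDS almost self-dual code of length $n_1+1$; (3) if both $\frac{te_1(r+1)}{2e_2}+\frac{t(r+1)}{2}$ and $\frac{(t-1)(r+1)}{2}$ are even and $n_1$ is odd, then for every $k$ with $1\leq k\leq \frac{n_1+1}{2}-1$ there exists a $q$-ary $[n_1+1,k]$ MDS self-orthogonal code.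
   Context: $\mathbb{F}_q$ denotes the finite field with $q$ elements. A linear code of length $n$ over $\mathbb{F}_q$ is a subspace of $\mathbb{F}_q^n$; an $[n,k]$ code has dimension $k$, and an $[n,k,d]$ code is MDS if its minimum Hamming distance is $d=n-k+1$. The (Euclidean) dual of a code $C$ is $C^\perp=\{x\in\mathbb{F}_q^n : \sum_i x_ic_i=0 \text{ for all } c\in C\}$. $C$ is self-orthogonal if $C\subseteq C^\perp$, and almost self-dual if $C\subseteq C^\perp$ and $\dim C^\perp=\dim C+1$. An MDS almost self-dual code is an almost self-dual code that is MDS. *)

theory Defs
  imports Complex_Main "HOL-Library.Function_Algebras" "HOL-Computational_Algebra.Primes"
begin

text \<open>Vectors of length n over a field are modelled as functions nat => 'a
  vanishing outside the index set {0..<n}; the ambient space F_q^n is fn_space n.\<close>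

definition vscale :: "'a::field \<Rightarrow> (nat \<Rightarrow> 'a) \<Rightarrow> (nat \<Rightarrow> 'a)" where
  "vscale c v = (\<lambda>i. c * v i)"

definition fn_space :: "nat \<Rightarrow> (nat \<Rightarrow> 'a::zero) set" where
  "fn_space n = {v. \<forall>i\<ge>n. v i = 0}"

definition linear_code :: "nat \<Rightarrow> (nat \<Rightarrow> 'a::field) set \<Rightarrow> bool" where
  "linear_code n C \<longleftrightarrow> C \<subseteq> fn_space n \<and> module.subspace vscale C"

definition code_dim :: "(nat \<Rightarrow> 'a::field) set \<Rightarrow> nat" where
  "code_dim C = vector_space.dim vscale C"

definition hamming_wt :: "nat \<Rightarrow> (nat \<Rightarrow> 'a::zero) \<Rightarrow> nat" where
  "hamming_wt n v = card {i. i < n \<and> v i \<noteq> 0}"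

definition min_dist :: "nat \<Rightarrow> (nat \<Rightarrow> 'a::field) set \<Rightarrow> nat" where
  "min_dist n C = Inf {hamming_wt n v | v. v \<in> C \<and> v \<noteq> 0}"

definition dual_code :: "nat \<Rightarrow> (nat \<Rightarrow> 'a::field) set \<Rightarrow> (nat \<Rightarrow> 'a) set" where
  "dual_code n C = {x \<in> fn_space n. \<forall>c\<in>C. (\<Sum>i<n. x i * c i) = 0}"

definition nk_code :: "nat \<Rightarrow> nat \<Rightarrow> (nat \<Rightarrow> 'a::field) set \<Rightarrow> bool" where
  "nk_code n k C \<longleftrightarrow> linear_code n C \<and> code_dim C = k"

definition is_MDS :: "nat \<Rightarrow> (nat \<Rightarrow> 'a::field) set \<Rightarrow> bool" where
  "is_MDS n C \<longleftrightarrow> linear_code n C \<and> min_dist n C = n - code_dim C + 1"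

definition self_orthogonal :: "nat \<Rightarrow> (nat \<Rightarrow> 'a::field) set \<Rightarrow> bool" where
  "self_orthogonal n C \<longleftrightarrow> linear_code n C \<and> C \<subseteq> dual_code n C"

definition almost_self_dual :: "nat \<Rightarrow> (nat \<Rightarrow> 'a::field) set \<Rightarrow> bool" where
  "almost_self_dual n C \<longleftrightarrow> linear_code n C \<and> C \<subseteq> dual_code n C
     \<and> code_dim (dual_code n C) = code_dim C + 1"

definition prime_power :: "nat \<Rightarrow> bool" where
  "prime_power r \<longleftrightarrow> (\<exists>p m. prime p \<and> m \<ge> 1 \<and> r = p ^ m)"

end

theory Submission
  imports Defs "HOL-Computational_Algebra.Polynomial" "HOL-Algebra.Algebraic_Closure_Type"
begin

text \<open>All codes are generalized Reed-Solomon codes \<open>GRS_k(a, v)\<close> evaluated on a set \<open>S\<close> that is a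
  union of cosets of two subgroups of \<open>F_q^*\<close>. By the identity
  \<open>\<Sum>x\<in>S. f x / \<Prod>y\<in>S-{x}. (x - y) = 0\<close> for \<open>deg f \<le> |S| - 2\<close>, such a code with \<open>2 k \<le> |S|\<close> is
  self-orthogonal once \<open>v_i^2 = \<lambda> / \<Prod>j\<noteq>i. (a_i - a_j)\<close> for a fixed \<open>\<lambda> \<noteq> 0\<close>, i.e. once all the
  products \<open>\<Prod>j\<noteq>i. (a_i - a_j)\<close> have the same quadratic character. The character is computed
  with Euler's criterion, raising to \<open>h = (q - 1)/2\<close>: differences of elements of order dividing
  \<open>r - 1\<close> lie in \<open>F_r^*\<close> and are squares, while for \<open>x, y\<close> of order dividing \<open>r + 1\<close> the
  Frobenius map gives \<open>(x - y)^h = (-1)^((r+1)/2) (x y)^((r+1)/2)\<close>. The parity hypotheses are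
  exactly what makes these signs agree over the whole evaluation set (and, for the codes of
  length \<open>n1 + 1\<close>, over the set with \<open>0\<close> adjoined). For odd length \<open>2 k + 1\<close> the dual of the
  self-orthogonal code \<open>GRS_k\<close> contains \<open>GRS_(k+1)\<close> and has dimension \<open>k + 1\<close>.\<close>

section \<open>Finite fields\<close>

lemma of_nat_card_UNIV_eq_0: "of_nat (card (UNIV :: 'a::{finite,field} set)) = (0::'a)"
proof -
  have "(\<Sum>x\<in>(UNIV::'a set). x + 1) = (\<Sum>x\<in>(\<lambda>x. x + 1) ` (UNIV::'a set). x)"
    by (subst sum.reindex) (auto simp: inj_on_def)
  also have "(\<lambda>x::'a. x + 1) ` UNIV = UNIV"
    by (auto intro: image_eqI[of _ _ "_ - 1"])
  finally have "(\<Sum>x\<in>(UNIV::'a set). x) + of_nat (card (UNIV::'a set)) = (\<Sum>x\<in>(UNIV::'a set). x)"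
    by (simp add: sum.distrib)
  thus ?thesis by simp
qed

lemma CHAR_eq_if_card_UNIV_eq_prime_power:
  assumes p: "Factorial_Ring.prime p" and card: "card (UNIV :: 'a::{finite,field} set) = p ^ n" and n: "n > 0"
  shows "CHAR('a) = p"
proof -
  have cp: "Factorial_Ring.prime CHAR('a)"
    by (rule prime_CHAR_semidom[OF finite_imp_CHAR_pos]) simp
  have "CHAR('a) dvd p ^ n"
    using of_nat_card_UNIV_eq_0[where 'a='a] card of_nat_eq_0_iff_char_dvd by metis
  hence "CHAR('a) dvd p" using cp prime_dvd_power by blast
  thus ?thesis using cp p by (simp add: primes_dvd_imp_eq)
qed

lemma frobenius_add:
  fixes x y :: "'a::{finite,field}"
  assumes card: "card (UNIV :: 'a set) = r ^ n" and n: "n > 0" and r: "prime_power r"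
  shows "(x + y) ^ r = x ^ r + y ^ r"
proof -
  obtain p m where pm: "Factorial_Ring.prime p" "m \<ge> 1" "r = p ^ m" using r by (auto simp: prime_power_def)
  have char: "CHAR('a) = p"
    using pm n card by (intro CHAR_eq_if_card_UNIV_eq_prime_power[of p "m * n"]) (auto simp: power_mult)
  hence "Factorial_Ring.prime CHAR('a)" using pm(1) by simp
  from freshmans_dream'[OF this, of r m x y] show ?thesis using pm char by simp
qed

lemma frobenius_diff:
  fixes x y :: "'a::{finite,field}"
  assumes "card (UNIV :: 'a set) = r ^ n" "n > 0" "prime_power r"
  shows "(x - y) ^ r = x ^ r - y ^ r"
  using frobenius_add[OF assms, of "x - y" y] by (simp add: algebra_simps)

lemma power_card_UNIV_minus_1_eq_1:
  fixes x :: "'a::{finite,field}"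
  assumes "x \<noteq> 0"
  shows "x ^ (card (UNIV :: 'a set) - 1) = 1"
proof -
  have "(\<Prod>y\<in>UNIV-{0}. x * y) = x ^ (card (UNIV :: 'a set) - 1) * \<Prod>(UNIV-{0::'a})"
    by (simp add: prod.distrib)
  moreover have "(\<Prod>y\<in>UNIV-{0}. x * y) = (\<Prod>y\<in>UNIV-{0::'a}. y)"
    by (rule prod.reindex_bij_witness[of _ "\<lambda>y. y / x" "\<lambda>y. x * y"]) (use assms in auto)
  moreover have "\<Prod>(UNIV-{0::'a}) \<noteq> 0" by (simp add: prod_zero_iff)
  ultimately show ?thesis by simp
qed

lemma pow_ring_of_type_algebra:
  "x [^]\<^bsub>(ring_of_type_algebra :: 'a::field ring)\<^esub> (n::nat) = x ^ n"
  by (induction n) (simp_all add: ring_of_type_algebra_def)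

lemma generator_exists:
  "\<exists>w::'a::{finite,field}. w \<noteq> 0 \<and> (\<forall>x. x \<noteq> 0 \<longrightarrow> (\<exists>i. x = w ^ i))"
proof -
  interpret field "ring_of_type_algebra :: 'a ring" by (rule field_from_type_algebra)
  obtain a where a: "a \<in> carrier (mult_of ring_of_type_algebra)"
    "carrier (mult_of (ring_of_type_algebra::'a ring)) = {a[^]\<^bsub>ring_of_type_algebra\<^esub>i | i::nat . i \<in> UNIV}"
    using finite_field_mult_group_has_gen by (auto simp: ring_of_type_algebra_def)
  have "x \<in> carrier (mult_of (ring_of_type_algebra::'a ring))" if "x \<noteq> 0" for x
    using that by (simp add: ring_of_type_algebra_def)
  hence "\<forall>x. x \<noteq> 0 \<longrightarrow> (\<exists>i. x = a ^ i)" using a(2) by (auto simp: pow_ring_of_type_algebra)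
  moreover have "a \<noteq> 0" using a(1) by (simp add: ring_of_type_algebra_def)
  ultimately show ?thesis by blast
qed

lemma generator_power_eq_1_iff:
  fixes w :: "'a::{finite,field}"
  assumes gen: "\<forall>x. x \<noteq> 0 \<longrightarrow> (\<exists>i. x = w ^ i)" and w0: "w \<noteq> 0"
  shows "w ^ n = 1 \<longleftrightarrow> (card (UNIV :: 'a set) - 1) dvd n"
proof -
  define Q where "Q = card (UNIV :: 'a set)"
  have Q2: "Q \<ge> 2"
  proof -
    have "card {0::'a, 1} \<le> Q" unfolding Q_def by (rule card_mono) auto
    thus ?thesis by simp
  qed
  have wQ: "w ^ (Q - 1) = 1" unfolding Q_def by (rule power_card_UNIV_minus_1_eq_1[OF w0])
  have w_mod: "w ^ n = w ^ (n mod d)" if "w ^ d = 1" for n d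
  proof -
    have "w ^ n = w ^ (d * (n div d)) * w ^ (n mod d)" by (simp flip: power_add)
    thus ?thesis by (simp add: power_mult that)
  qed
  \<comment> \<open>The powers of \<open>w\<close> below a period cover all \<open>Q - 1\<close> nonzero elements.\<close>
  have period_ge: "Q - 1 \<le> d" if wd: "w ^ d = 1" and d0: "d > 0" for d
  proof -
    have "UNIV - {0} \<subseteq> (\<lambda>i. w ^ i) ` {..<d}"
    proof
      fix x :: 'a assume "x \<in> UNIV - {0}"
      then obtain i where "x = w ^ i" using gen by blast
      hence "x = w ^ (i mod d)" using w_mod[OF wd] by simp
      thus "x \<in> (\<lambda>i. w ^ i) ` {..<d}" using d0 by simp
    qed
    hence "card (UNIV - {0::'a}) \<le> card ((\<lambda>i. w ^ i) ` {..<d})" by (intro card_mono) auto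
    also have "\<dots> \<le> d" using card_image_le[of "{..<d}" "\<lambda>i. w ^ i"] by simp
    finally show ?thesis unfolding Q_def by (simp add: card_Diff_singleton)
  qed
  show ?thesis unfolding Q_def[symmetric]
  proof
    assume "w ^ n = 1"
    hence "w ^ (n mod (Q - 1)) = 1" using w_mod[OF wQ] by simp
    moreover have "n mod (Q - 1) < Q - 1" using Q2 by simp
    ultimately have "\<not> n mod (Q - 1) > 0" using period_ge by fastforce
    thus "(Q - 1) dvd n" by (simp add: dvd_eq_mod_eq_0)
  next
    assume "(Q - 1) dvd n"
    thus "w ^ n = 1" using wQ by (auto simp: power_mult)
  qed
qed

lemma primitive_element_exists:
  "\<exists>w::'a::{finite,field}. w \<noteq> 0 \<and> (\<forall>x. x \<noteq> 0 \<longrightarrow> (\<exists>i. x = w ^ i)) \<and>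
      (\<forall>n. w ^ n = 1 \<longleftrightarrow> (card (UNIV :: 'a set) - 1) dvd n)"
  using generator_exists generator_power_eq_1_iff by blast

section \<open>Generalized Reed-Solomon codes\<close>

definition diff_prod :: "'a::field set \<Rightarrow> 'a \<Rightarrow> 'a" where
  "diff_prod S x = (\<Prod>y\<in>S-{x}. x - y)"

text \<open>The sum is the coefficient of \<open>X^(card S - 1)\<close> in the Lagrange interpolant of \<open>p\<close> on \<open>S\<close>,
  which is \<open>p\<close> itself.\<close>

lemma sum_poly_div_diff_prod_eq_0:
  fixes S :: "'a::field set" and p :: "'a poly"
  assumes fin: "finite S" and deg: "degree p + 2 \<le> card S"
  shows "(\<Sum>x\<in>S. poly p x / diff_prod S x) = 0"
proof -
  define L where "L = (\<Sum>x\<in>S. smult (poly p x / diff_prod S x) (\<Prod>y\<in>S-{x}. [:-y,1:]))"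
  have deg_factor: "degree (\<Prod>y\<in>S-{x}. [:-y,1:]) = card S - 1" if "x \<in> S" for x
    using that fin by (subst degree_prod_sum_eq) auto
  have lead_factor: "coeff (\<Prod>y\<in>S-{x}. [:-y,1:]) (card S - 1) = 1" if "x \<in> S" for x
  proof -
    have "lead_coeff (\<Prod>y\<in>S-{x}. [:-y,1:]) = 1" by (simp add: lead_coeff_prod)
    thus ?thesis using deg_factor[OF that] by simp
  qed
  have degL: "degree L \<le> card S - 1"
    unfolding L_def using fin
    by (intro degree_sum_le) (auto intro: order.trans[OF degree_smult_le] simp: deg_factor)
  have poly_L: "poly L z = poly p z" if "z \<in> S" for z
  proof -
    have "poly L z = (\<Sum>x\<in>S. (poly p x / diff_prod S x) * (\<Prod>y\<in>S-{x}. z - y))"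
      by (simp add: L_def poly_sum poly_prod)
    also have "\<dots> = (\<Sum>x\<in>{z}. (poly p x / diff_prod S x) * (\<Prod>y\<in>S-{x}. z - y))"
      by (rule sum.mono_neutral_right) (use fin that in \<open>auto intro!: prod_zero\<close>)
    also have "\<dots> = poly p z"
      using fin by (simp add: diff_prod_def prod_zero_iff)
    finally show ?thesis .
  qed
  have "p = L"
    by (rule poly_eqI_degree[of S]) (use poly_L deg degL in auto)
  hence "coeff L (card S - 1) = 0"
    using deg by (auto intro!: coeff_eq_0)
  moreover have "coeff L (card S - 1) = (\<Sum>x\<in>S. poly p x / diff_prod S x)"
    unfolding L_def coeff_sum coeff_smult using lead_factor by (intro sum.cong refl) simp
  ultimately show ?thesis by simp
qed

lemma vector_space_vscale: "vector_space (vscale :: 'a::field \<Rightarrow> (nat \<Rightarrow> 'a) \<Rightarrow> _)"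
  by unfold_locales (auto simp: vscale_def fun_eq_iff algebra_simps)

interpretation vs: vector_space "vscale :: 'a::field \<Rightarrow> (nat \<Rightarrow> 'a) \<Rightarrow> (nat \<Rightarrow> 'a)"
  by (rule vector_space_vscale)

lemma sum_fun_apply: "(\<Sum>i\<in>I. F i) j = (\<Sum>i\<in>I. F i j)"
  by (induction I rule: infinite_finite_induct) auto

definition unit_vec :: "nat \<Rightarrow> nat \<Rightarrow> 'a::field" where
  "unit_vec i = (\<lambda>j. if j = i then 1 else 0)"

lemma in_span_unit_vecs:
  fixes x :: "nat \<Rightarrow> 'a::field"
  assumes "finite I" "\<And>j. j \<notin> I \<Longrightarrow> x j = 0"
  shows "x \<in> vs.span (unit_vec ` I)"
proof -
  have "x j = (\<Sum>i\<in>I. vscale (x i) (unit_vec i)) j" for j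
    unfolding sum_fun_apply using assms
    by (cases "j \<in> I") (auto simp: vscale_def unit_vec_def if_distrib[of "\<lambda>y. _ * y"] cong: if_cong)
  hence "x = (\<Sum>i\<in>I. vscale (x i) (unit_vec i))" ..
  also have "\<dots> \<in> vs.span (unit_vec ` I)"
    by (intro vs.span_sum vs.span_scale vs.span_base) auto
  finally show ?thesis .
qed

lemma independent_supported_card_le:
  fixes B :: "(nat \<Rightarrow> 'a::field) set"
  assumes "vs.independent B" "finite I" "\<And>x j. x \<in> B \<Longrightarrow> j \<notin> I \<Longrightarrow> x j = 0"
  shows "finite B \<and> card B \<le> card I"
proof -
  have "B \<subseteq> vs.span (unit_vec ` I)"
    using assms(2,3) by (auto intro: in_span_unit_vecs)
  hence "finite B" "card B \<le> card (unit_vec ` I :: (nat \<Rightarrow> 'a) set)"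
    using vs.independent_span_bound[OF _ assms(1)] assms(2) by blast+
  moreover have "card (unit_vec ` I :: (nat \<Rightarrow> 'a) set) \<le> card I"
    by (rule card_image_le[OF assms(2)])
  ultimately show ?thesis by simp
qed

lemma dual_code_subspace: "vs.subspace (dual_code N C)"
proof (rule vs.subspaceI)
  show "0 \<in> dual_code N C" by (auto simp: dual_code_def fn_space_def)
next
  fix x y assume "x \<in> dual_code N C" "y \<in> dual_code N C"
  thus "x + y \<in> dual_code N C"
    by (auto simp: dual_code_def fn_space_def algebra_simps sum.distrib)
next
  fix c x assume "x \<in> dual_code N C"
  thus "vscale c x \<in> dual_code N C"
    by (auto simp: dual_code_def fn_space_def vscale_def mult.assoc simp flip: sum_distrib_left)
qed

definition grs_word :: "nat \<Rightarrow> (nat \<Rightarrow> 'a::field) \<Rightarrow> (nat \<Rightarrow> 'a) \<Rightarrow> 'a poly \<Rightarrow> (nat \<Rightarrow> 'a)" where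
  "grs_word N a v f = (\<lambda>i. if i < N then v i * poly f (a i) else 0)"

definition grs :: "nat \<Rightarrow> nat \<Rightarrow> (nat \<Rightarrow> 'a::field) \<Rightarrow> (nat \<Rightarrow> 'a) \<Rightarrow> (nat \<Rightarrow> 'a) set" where
  "grs N k a v = grs_word N a v ` {f. degree f < k}"

lemma grs_word_add: "grs_word N a v (f + g) = grs_word N a v f + grs_word N a v g"
  by (auto simp: grs_word_def fun_eq_iff algebra_simps)

lemma grs_word_diff: "grs_word N a v (f - g) = grs_word N a v f - grs_word N a v g"
  by (auto simp: grs_word_def fun_eq_iff algebra_simps)

lemma grs_word_smult: "grs_word N a v (smult c f) = vscale c (grs_word N a v f)"
  by (auto simp: grs_word_def fun_eq_iff vscale_def algebra_simps)

lemma grs_word_0: "grs_word N a v 0 = 0"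
  by (auto simp: grs_word_def fun_eq_iff)

lemma grs_word_sum: "grs_word N a v (sum f A) = (\<Sum>x\<in>A. grs_word N a v (f x))"
  by (induction A rule: infinite_finite_induct) (auto simp: grs_word_0 grs_word_add)

lemma grs_subspace: "k \<ge> 1 \<Longrightarrow> vs.subspace (grs N k a v)"
proof (rule vs.subspaceI)
  assume "k \<ge> 1"
  thus "0 \<in> grs N k a v" unfolding grs_def by (auto intro!: image_eqI[of _ _ 0] simp: grs_word_0)
next
  fix x y assume "x \<in> grs N k a v" "y \<in> grs N k a v"
  then obtain f g where "x = grs_word N a v f" "y = grs_word N a v g" "degree f < k" "degree g < k"
    by (auto simp: grs_def)
  thus "x + y \<in> grs N k a v" unfolding grs_def
    by (intro image_eqI[of _ _ "f+g"]) (auto simp: grs_word_add intro: le_less_trans[OF degree_add_le_max])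
next
  fix c x assume "x \<in> grs N k a v"
  then obtain f where "x = grs_word N a v f" "degree f < k" by (auto simp: grs_def)
  thus "vscale c x \<in> grs N k a v" unfolding grs_def
    by (intro image_eqI[of _ _ "smult c f"]) (auto simp: grs_word_smult intro: le_less_trans[OF degree_smult_le])
qed

lemma linear_code_grs: "k \<ge> 1 \<Longrightarrow> linear_code N (grs N k a v)"
  using grs_subspace[of k N a v] by (auto simp: linear_code_def grs_def grs_word_def fn_space_def)

definition grs_monom_word :: "nat \<Rightarrow> (nat \<Rightarrow> 'a::field) \<Rightarrow> (nat \<Rightarrow> 'a) \<Rightarrow> nat \<Rightarrow> nat \<Rightarrow> 'a" where
  "grs_monom_word N a v j = grs_word N a v (monom 1 j)"

definition restrict_from :: "nat \<Rightarrow> (nat \<Rightarrow> 'a::field) \<Rightarrow> (nat \<Rightarrow> 'a)" where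
  "restrict_from k x = (\<lambda>i. if k \<le> i then x i else 0)"

lemma module_hom_restrict_from: "module_hom vscale vscale (restrict_from k :: (nat \<Rightarrow> 'a::field) \<Rightarrow> _)"
  unfolding module_hom_iff module_iff_vector_space
  using vector_space_vscale by (auto simp: restrict_from_def vscale_def fun_eq_iff)

context
  fixes N :: nat and a v :: "nat \<Rightarrow> 'a::field"
  assumes inj: "inj_on a {..<N}" and v_nonzero: "\<And>i. i < N \<Longrightarrow> v i \<noteq> 0"
begin

lemma grs_word_eq_0D: assumes "degree f < N" "grs_word N a v f = 0" shows "f = 0"
proof (rule poly_eqI_degree[of "a ` {..<N}"])
  fix x assume "x \<in> a ` {..<N}"
  then obtain i where "i < N" "x = a i" by auto
  with assms(2) have "v i * poly f (a i) = 0" by (auto simp: grs_word_def fun_eq_iff dest: spec[of _ i])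
  with v_nonzero \<open>i < N\<close> \<open>x = a i\<close> show "poly f x = poly 0 x" by auto
qed (use assms inj in \<open>auto simp: card_image\<close>)

lemma hamming_wt_grs_word: "hamming_wt N (grs_word N a v f) = N - card {i. i < N \<and> poly f (a i) = 0}"
proof -
  have e: "{i. i < N \<and> grs_word N a v f i \<noteq> 0} = {..<N} - {i. i < N \<and> poly f (a i) = 0}"
    using v_nonzero by (auto simp: grs_word_def)
  show ?thesis unfolding hamming_wt_def e by (subst card_Diff_subset) auto
qed

lemma card_grs_zeros_le_degree:
  assumes "f \<noteq> 0" shows "card {i. i < N \<and> poly f (a i) = 0} \<le> degree f"
proof -
  have "card {i. i < N \<and> poly f (a i) = 0} = card (a ` {i. i < N \<and> poly f (a i) = 0})"
    by (rule card_image[symmetric]) (rule inj_on_subset[OF inj], auto)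
  also have "\<dots> \<le> card {x. poly f x = 0}"
    by (intro card_mono poly_roots_finite assms) auto
  also have "\<dots> \<le> degree f" by (rule card_poly_roots_bound[OF assms])
  finally show ?thesis .
qed

lemma grs_eq_span: assumes "k \<ge> 1" shows "grs N k a v = vs.span (grs_monom_word N a v ` {..<k})"
proof (rule vs.span_subspace[symmetric])
  show "grs_monom_word N a v ` {..<k} \<subseteq> grs N k a v"
    by (auto simp: grs_monom_word_def grs_def degree_monom_eq)
  show "vs.subspace (grs N k a v)" using grs_subspace assms .
  show "grs N k a v \<subseteq> vs.span (grs_monom_word N a v ` {..<k})"
  proof
    fix x assume "x \<in> grs N k a v"
    then obtain f where f: "x = grs_word N a v f" "degree f < k" by (auto simp: grs_def)
    have "f = (\<Sum>j<k. smult (coeff f j) (monom 1 j))"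
      using f(2) by (intro poly_eqI) (auto simp: coeff_sum coeff_monom coeff_eq_0 if_distrib cong: if_cong)
    hence "grs_word N a v f = grs_word N a v (\<Sum>j<k. smult (coeff f j) (monom 1 j))" by simp
    also have "\<dots> = (\<Sum>j<k. vscale (coeff f j) (grs_monom_word N a v j))"
      unfolding grs_word_sum grs_monom_word_def grs_word_smult ..
    finally have "x = (\<Sum>j<k. vscale (coeff f j) (grs_monom_word N a v j))" using f(1) by simp
    thus "x \<in> vs.span (grs_monom_word N a v ` {..<k})"
      by (simp only:) (intro vs.span_sum vs.span_scale vs.span_base, auto)
  qed
qed

lemma inj_on_grs_monom_word: assumes "k \<le> N" shows "inj_on (grs_monom_word N a v) {..<k}"
proof
  fix i j assume ij: "i \<in> {..<k}" "j \<in> {..<k}" "grs_monom_word N a v i = grs_monom_word N a v j"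
  have "grs_word N a v (monom 1 i - monom 1 j) = 0"
    using ij(3) by (simp add: grs_monom_word_def grs_word_diff)
  moreover have "degree (monom (1::'a) i - monom 1 j) < N"
    using ij assms by (intro le_less_trans[OF degree_diff_le_max]) (auto simp: degree_monom_eq)
  ultimately have "monom (1::'a) i - monom 1 j = 0" by (rule grs_word_eq_0D[rotated])
  hence "coeff (monom (1::'a) i) i = coeff (monom 1 j) i" by simp
  thus "i = j" by (auto simp: coeff_monom split: if_splits)
qed

lemma independent_grs_monom_words:
  assumes "k \<le> N" shows "vs.independent (grs_monom_word N a v ` {..<k})"
proof
  assume "vs.dependent (grs_monom_word N a v ` {..<k})"
  then obtain u where u: "\<exists>x\<in>grs_monom_word N a v ` {..<k}. u x \<noteq> 0"
      "(\<Sum>x\<in>grs_monom_word N a v ` {..<k}. vscale (u x) x) = 0"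
    by (auto simp: vs.dependent_finite)
  define F where "F = (\<Sum>j<k. smult (u (grs_monom_word N a v j)) (monom 1 j))"
  have "grs_word N a v F = (\<Sum>j<k. vscale (u (grs_monom_word N a v j)) (grs_monom_word N a v j))"
    unfolding F_def grs_word_sum grs_word_smult grs_monom_word_def ..
  also have "\<dots> = 0" using u(2) by (simp add: sum.reindex[OF inj_on_grs_monom_word[OF assms]])
  finally have "grs_word N a v F = 0" .
  from u(1) obtain j where j: "j < k" "u (grs_monom_word N a v j) \<noteq> 0" by auto
  have "degree F < N"
    unfolding F_def using assms j(1)
    by (intro degree_sum_less) (auto intro: le_less_trans[OF degree_smult_le] simp: degree_monom_eq)
  with \<open>grs_word N a v F = 0\<close> have "F = 0" using grs_word_eq_0D by blast
  have "coeff F j = u (grs_monom_word N a v j)"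
    unfolding F_def using j(1) by (simp add: coeff_sum coeff_monom if_distrib[of "\<lambda>x. _ * x"] cong: if_cong)
  with \<open>F = 0\<close> j(2) show False by simp
qed

lemma code_dim_grs: assumes "1 \<le> k" "k \<le> N" shows "code_dim (grs N k a v) = k"
  unfolding code_dim_def grs_eq_span[OF assms(1)]
  by (simp add: vs.dim_eq_card_independent[OF independent_grs_monom_words[OF assms(2)]]
      card_image[OF inj_on_grs_monom_word[OF assms(2)]])

text \<open>The Singleton bound is attained by the word of \<open>\<Prod>j<k-1. (X - a j)\<close>.\<close>

lemma min_dist_grs: assumes "1 \<le> k" "k \<le> N" shows "min_dist N (grs N k a v) = N - k + 1"
proof -
  define f0 :: "'a poly" where "f0 = (\<Prod>j<k-1. [:-a j, 1:])"
  have f0_nonzero: "f0 \<noteq> 0" unfolding f0_def by (simp add: prod_zero_iff)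
  have deg_f0: "degree f0 = k - 1" unfolding f0_def by (subst degree_prod_sum_eq) auto
  have "poly f0 (a i) = 0 \<longleftrightarrow> i < k - 1" if "i < N" for i
    using inj that assms by (auto simp: f0_def poly_prod prod_zero_iff dest: inj_onD)
  hence zeros: "{i. i < N \<and> poly f0 (a i) = 0} = {..<k-1}" using assms by auto
  have "degree f0 < N" using deg_f0 assms by linarith
  hence "grs_word N a v f0 \<noteq> 0"
    using grs_word_eq_0D[of f0] f0_nonzero by auto
  moreover have "grs_word N a v f0 \<in> grs N k a v" using deg_f0 assms by (auto simp: grs_def)
  moreover have "hamming_wt N (grs_word N a v f0) = N - k + 1"
    using hamming_wt_grs_word zeros assms by simp
  ultimately have mem: "N - k + 1 \<in> {hamming_wt N c |c. c \<in> grs N k a v \<and> c \<noteq> 0}" by force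
  have lb: "N - k + 1 \<le> x" if "x \<in> {hamming_wt N c |c. c \<in> grs N k a v \<and> c \<noteq> 0}" for x
  proof -
    from that obtain f where f: "x = hamming_wt N (grs_word N a v f)" "degree f < k" "grs_word N a v f \<noteq> 0"
      by (auto simp: grs_def)
    have "f \<noteq> 0" using f(3) by (auto simp: grs_word_0)
    from card_grs_zeros_le_degree[OF this] f(2) assms show "N - k + 1 \<le> x"
      unfolding f(1) hamming_wt_grs_word by linarith
  qed
  show ?thesis unfolding min_dist_def by (rule cInf_eq_minimum[OF mem lb])
qed

lemma grs_word_inner_eq_0:
  assumes sq: "\<And>i. i < N \<Longrightarrow> v i ^ 2 = lam / diff_prod (a ` {..<N}) (a i)"
    and deg: "degree f + degree g + 2 \<le> N"
  shows "(\<Sum>i<N. grs_word N a v f i * grs_word N a v g i) = 0"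
proof -
  have "(\<Sum>i<N. grs_word N a v f i * grs_word N a v g i)
      = (\<Sum>i<N. lam * (poly (f * g) (a i) / diff_prod (a ` {..<N}) (a i)))"
  proof (intro sum.cong refl)
    fix i assume "i \<in> {..<N}"
    hence "v i * v i = lam / diff_prod (a ` {..<N}) (a i)" using sq by (simp add: power2_eq_square)
    moreover have "v i * poly f (a i) * (v i * poly g (a i)) = (v i * v i) * poly (f * g) (a i)"
      by (simp add: algebra_simps)
    ultimately show "grs_word N a v f i * grs_word N a v g i
        = lam * (poly (f * g) (a i) / diff_prod (a ` {..<N}) (a i))"
      using \<open>i \<in> {..<N}\<close> by (simp add: grs_word_def)
  qed
  also have "\<dots> = lam * (\<Sum>x\<in>a ` {..<N}. poly (f * g) x / diff_prod (a ` {..<N}) x)"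
    by (simp add: sum_distrib_left sum.reindex[OF inj])
  also have "(\<Sum>x\<in>a ` {..<N}. poly (f * g) x / diff_prod (a ` {..<N}) x) = 0"
    by (rule sum_poly_div_diff_prod_eq_0)
      (use deg inj degree_mult_le[of f g] in \<open>auto simp: card_image\<close>)
  finally show ?thesis by simp
qed

lemma grs_subset_dual_code:
  assumes sq: "\<And>i. i < N \<Longrightarrow> v i ^ 2 = lam / diff_prod (a ` {..<N}) (a i)"
    and kk: "k + k' \<le> N"
  shows "grs N k' a v \<subseteq> dual_code N (grs N k a v)"
proof
  fix x assume "x \<in> grs N k' a v"
  then obtain g where g: "x = grs_word N a v g" "degree g < k'" by (auto simp: grs_def)
  show "x \<in> dual_code N (grs N k a v)"
    unfolding dual_code_def
  proof (intro CollectI conjI ballI)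
    show "x \<in> fn_space N" using g by (auto simp: grs_word_def fn_space_def)
    fix c assume "c \<in> grs N k a v"
    then obtain f where f: "c = grs_word N a v f" "degree f < k" by (auto simp: grs_def)
    have "(\<Sum>i<N. grs_word N a v g i * grs_word N a v f i) = 0"
      by (rule grs_word_inner_eq_0[OF sq]) (use f g kk in auto)
    thus "(\<Sum>i<N. x i * c i) = 0" using f g by simp
  qed
qed

text \<open>Test against the word of \<open>\<Prod>j\<in>{..<k}-{i0}. (X - a j)\<close>, which among the first \<open>k\<close>
  positions is nonzero only at \<open>i0\<close>.\<close>

lemma dual_grs_eq_0_if_restrict_from_eq_0:
  assumes kN: "k \<le> N" and x: "x \<in> dual_code N (grs N k a v)" and px: "restrict_from k x = 0"
  shows "x = 0"
proof
  fix i0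
  have xz: "x i = 0" if "k \<le> i" for i using px that by (auto simp: restrict_from_def fun_eq_iff dest: spec[of _ i])
  show "x i0 = 0 i0"
  proof (cases "i0 < k")
    case False
    thus ?thesis using xz by simp
  next
    case True
    define f :: "'a poly" where "f = (\<Prod>j\<in>{..<k}-{i0}. [:-a j, 1:])"
    have "degree f = k - 1" unfolding f_def using True by (subst degree_prod_sum_eq) auto
    hence "grs_word N a v f \<in> grs N k a v" using True by (auto simp: grs_def)
    hence s0: "(\<Sum>i<N. x i * grs_word N a v f i) = 0" using x by (auto simp: dual_code_def)
    have pz: "poly f (a i) = 0" if "i < k" "i \<noteq> i0" for i
      using that by (auto simp: f_def poly_prod prod_zero_iff)
    have pnz: "poly f (a i0) \<noteq> 0"
      using True kN inj by (auto simp: f_def poly_prod prod_zero_iff dest: inj_onD)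
    have "(\<Sum>i<N. x i * grs_word N a v f i) = (\<Sum>i\<in>{i0}. x i * grs_word N a v f i)"
    proof (rule sum.mono_neutral_right)
      show "\<forall>i\<in>{..<N} - {i0}. x i * grs_word N a v f i = 0"
      proof
        fix i assume "i \<in> {..<N} - {i0}"
        thus "x i * grs_word N a v f i = 0"
          by (cases "k \<le> i") (auto simp: xz pz grs_word_def)
      qed
    qed (use True kN in auto)
    hence "x i0 * (v i0 * poly f (a i0)) = 0" using s0 True kN by (simp add: grs_word_def)
    thus ?thesis using pnz v_nonzero[of i0] True kN by simp
  qed
qed

lemma code_dim_dual_grs:
  assumes sq: "\<And>i. i < N \<Longrightarrow> v i ^ 2 = lam / diff_prod (a ` {..<N}) (a i)"
    and N: "N = 2 * k + 1"
  shows "code_dim (dual_code N (grs N k a v)) = k + 1"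
proof -
  define D where "D = dual_code N (grs N k a v)"
  obtain B where B: "B \<subseteq> D" "vs.independent B" "D \<subseteq> vs.span B" "card B = vs.dim D"
    using vs.basis_exists by blast
  have D_subspace: "vs.subspace D" unfolding D_def by (rule dual_code_subspace)
  have supp: "x j = 0" if "x \<in> B" "j \<notin> {..<N}" for x j
    using that B(1) by (auto simp: D_def dual_code_def fn_space_def)
  have finB: "finite B" using independent_supported_card_le[of B "{..<N}"] B(2) supp by blast
  have "grs N (k + 1) a v \<subseteq> D" unfolding D_def
    by (rule grs_subset_dual_code[OF sq]) (use N in auto)
  hence "grs_monom_word N a v ` {..<k+1} \<subseteq> vs.span B"
    using B(3) grs_eq_span[of "k + 1"] vs.span_superset[of "grs_monom_word N a v ` {..<k+1}"] by auto
  hence "card (grs_monom_word N a v ` {..<k+1}) \<le> card B"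
    using vs.independent_span_bound[OF finB independent_grs_monom_words] N by auto
  hence lower: "k + 1 \<le> card B"
    using card_image[OF inj_on_grs_monom_word[of "k + 1"]] N by auto
  interpret restr: module_hom vscale vscale "restrict_from k :: (nat \<Rightarrow> 'a) \<Rightarrow> _"
    by (rule module_hom_restrict_from)
  have "inj_on (restrict_from k) D"
  proof (rule inj_onI)
    fix x y assume xy: "x \<in> D" "y \<in> D" "restrict_from k x = restrict_from k y"
    have "restrict_from k (x - y) i = 0" for i
      using fun_cong[OF xy(3), of i] by (auto simp: restrict_from_def)
    hence "restrict_from k (x - y) = 0" by auto
    hence "x - y = 0"
      by (rule dual_grs_eq_0_if_restrict_from_eq_0[rotated 2])
        (use N vs.subspace_diff[OF D_subspace xy(1,2)] in \<open>auto simp: D_def\<close>)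
    thus "x = y" by simp
  qed
  hence inj_B: "inj_on (restrict_from k) (vs.span B)"
    using inj_on_subset vs.span_minimal[OF B(1) D_subspace] by blast
  have "vs.independent (restrict_from k ` B)"
    using restr.independent_injective_image[OF B(2) inj_B] .
  moreover have "y j = 0" if "y \<in> restrict_from k ` B" "j \<notin> {k..<N}" for y j
    using that supp by (auto simp: restrict_from_def)
  ultimately have "card (restrict_from k ` B) \<le> N - k"
    using independent_supported_card_le[of "restrict_from k ` B" "{k..<N}"] by auto
  hence "card B \<le> k + 1"
    using card_image[OF inj_on_subset[OF inj_B vs.span_superset]] N by simp
  with lower show ?thesis unfolding code_dim_def D_def B(4) by simp
qed

end

lemma square_multipliers_exist:
  fixes S :: "'a::field set"
  assumes fin: "finite S" and lam: "lam \<noteq> 0"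
    and sq: "\<forall>x\<in>S. \<exists>y. y ^ 2 = lam / diff_prod S x"
  obtains a v where "inj_on a {..<card S}" "\<And>i. i < card S \<Longrightarrow> v i \<noteq> 0"
    "\<And>i. i < card S \<Longrightarrow> v i ^ 2 = lam / diff_prod (a ` {..<card S}) (a i)"
proof -
  obtain a where a: "bij_betw a {..<card S} S"
    using ex_bij_betw_nat_finite[OF fin] by (auto simp: lessThan_atLeast0)
  hence img: "a ` {..<card S} = S" by (simp add: bij_betw_def)
  define v where "v i = (SOME y. y ^ 2 = lam / diff_prod S (a i))" for i
  have v_sq: "v i ^ 2 = lam / diff_prod S (a i)" if "i < card S" for i
  proof -
    have "a i \<in> S" using img that by auto
    hence "\<exists>y. y ^ 2 = lam / diff_prod S (a i)" using sq by blast
    thus ?thesis unfolding v_def by (rule someI_ex)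
  qed
  have "diff_prod S x \<noteq> 0" for x
    using fin by (simp add: diff_prod_def prod_zero_iff)
  show ?thesis
  proof (rule that)
    show "inj_on a {..<card S}" using a by (simp add: bij_betw_def)
    show "v i \<noteq> 0" if "i < card S" for i
    proof
      assume "v i = 0"
      hence "lam / diff_prod S (a i) = 0" using v_sq[OF that] by simp
      thus False using lam \<open>\<And>x. diff_prod S x \<noteq> 0\<close> by simp
    qed
    show "v i ^ 2 = lam / diff_prod (a ` {..<card S}) (a i)" if "i < card S" for i
      using v_sq[OF that] img by simp
  qed
qed

lemma mds_self_orthogonal_code_exists:
  fixes S :: "'a::field set"
  assumes fin: "finite S" and lam: "lam \<noteq> 0"
    and sq: "\<forall>x\<in>S. \<exists>y. y ^ 2 = lam / diff_prod S x"
    and k: "1 \<le> k" "2 * k \<le> card S"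
  shows "\<exists>C :: (nat \<Rightarrow> 'a) set. nk_code (card S) k C \<and> is_MDS (card S) C \<and> self_orthogonal (card S) C"
proof -
  obtain a v where av: "inj_on a {..<card S}" "\<And>i. i < card S \<Longrightarrow> v i \<noteq> 0"
    "\<And>i. i < card S \<Longrightarrow> v i ^ 2 = lam / diff_prod (a ` {..<card S}) (a i)"
    using square_multipliers_exist[OF fin lam sq] by blast
  let ?C = "grs (card S) k a v"
  have "linear_code (card S) ?C" using k by (intro linear_code_grs) simp
  moreover have "code_dim ?C = k" using code_dim_grs[OF av(1,2)] k by simp
  moreover have "min_dist (card S) ?C = card S - k + 1" using min_dist_grs[OF av(1,2)] k by simp
  moreover have "?C \<subseteq> dual_code (card S) ?C" using grs_subset_dual_code[OF av] k by simp
  ultimately show ?thesis by (auto simp: nk_code_def is_MDS_def self_orthogonal_def)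
qed

lemma mds_almost_self_dual_code_exists:
  fixes S :: "'a::field set"
  assumes fin: "finite S" and lam: "lam \<noteq> 0"
    and sq: "\<forall>x\<in>S. \<exists>y. y ^ 2 = lam / diff_prod S x"
    and odd: "odd (card S)" and three: "3 \<le> card S"
  shows "\<exists>C :: (nat \<Rightarrow> 'a) set. is_MDS (card S) C \<and> almost_self_dual (card S) C"
proof -
  obtain a v where av: "inj_on a {..<card S}" "\<And>i. i < card S \<Longrightarrow> v i \<noteq> 0"
    "\<And>i. i < card S \<Longrightarrow> v i ^ 2 = lam / diff_prod (a ` {..<card S}) (a i)"
    using square_multipliers_exist[OF fin lam sq] by blast
  define k where "k = card S div 2"
  have N: "card S = 2 * k + 1" and k: "1 \<le> k" using odd three by (auto simp: k_def)
  let ?C = "grs (card S) k a v"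
  have "linear_code (card S) ?C" using k by (intro linear_code_grs)
  moreover have "code_dim ?C = k" using code_dim_grs[OF av(1,2)] k N by simp
  moreover have "min_dist (card S) ?C = card S - k + 1" using min_dist_grs[OF av(1,2)] k N by simp
  moreover have "?C \<subseteq> dual_code (card S) ?C" using grs_subset_dual_code[OF av] N by simp
  moreover have "code_dim (dual_code (card S) ?C) = k + 1" using code_dim_dual_grs[OF av N] .
  ultimately show ?thesis by (auto simp: is_MDS_def almost_self_dual_def)
qed

section \<open>Arithmetic of the parameters\<close>

lemma neg_one_power_cases: "(-1::'a::ring_1) ^ n = 1 \<or> (-1::'a) ^ n = -1"
  by (cases "even n") auto

lemma neg_one_power_cong: "even m = even n \<Longrightarrow> (-1::'a::ring_1) ^ m = (-1) ^ n"
  by (cases "even m") auto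

lemma odd_prime_power_ge_3:
  assumes "prime_power r" "odd r" shows "r \<ge> 3"
proof -
  obtain p m where pm: "Factorial_Ring.prime p" "m \<ge> 1" "r = p ^ m"
    using assms(1) by (auto simp: prime_power_def)
  have "2 \<le> p" using pm(1) by (simp add: prime_ge_2_nat)
  also have "p = p ^ 1" by simp
  also have "\<dots> \<le> p ^ m" using pm(2) \<open>2 \<le> p\<close> by (intro power_increasing) auto
  finally have "2 \<le> r" using pm(3) by simp
  thus ?thesis using assms(2) by (cases "r = 2") auto
qed

lemma two_power_dvd_gcd:
  fixes e1 e2 :: nat
  assumes e1_cong: "e1 mod 2 ^ (l + 1) = 2 ^ l mod 2 ^ (l + 1)" and e2_dvd: "2 ^ l dvd e2"
  shows "2 ^ l dvd gcd e1 e2" and "odd (e1 div gcd e1 e2)"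
proof -
  have e1_mod: "e1 mod 2 ^ (l + 1) = 2 ^ l" using e1_cong by simp
  have "e1 = 2 ^ (l + 1) * (e1 div 2 ^ (l + 1)) + e1 mod 2 ^ (l + 1)" by simp
  moreover have "(2::nat) ^ l dvd 2 ^ (l + 1) * (e1 div 2 ^ (l + 1))" by (simp add: le_imp_power_dvd)
  ultimately have "2 ^ l dvd e1" using e1_mod by (metis dvd_add dvd_refl)
  thus gcd: "2 ^ l dvd gcd e1 e2" using e2_dvd by simp
  have not_dvd: "\<not> 2 ^ (l + 1) dvd e1" using e1_mod by (auto simp: dvd_eq_mod_eq_0)
  show "odd (e1 div gcd e1 e2)"
  proof
    assume "even (e1 div gcd e1 e2)"
    then obtain k where "e1 div gcd e1 e2 = 2 * k" by blast
    hence "e1 = (gcd e1 e2 * 2) * k" by (metis dvd_mult_div_cancel gcd_dvd1 mult.assoc)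
    moreover have "2 ^ (l + 1) dvd gcd e1 e2 * 2" using gcd by simp
    ultimately show False using not_dvd by (metis dvd_mult2)
  qed
qed

lemma gcd_quotients_dvd:
  fixes e1 e2 r :: nat
  assumes pos: "e1 > 0" "e2 > 0" and odd_D1: "odd (e1 div gcd e1 e2)" and r_odd: "odd r"
    and div1: "2 * e2 dvd e1 * (r + 1)" and div2: "e1 dvd e2 * (r - 1)"
  shows "2 * (e1 div gcd e1 e2) dvd r - 1" and "2 * (e2 div gcd e1 e2) dvd r + 1"
proof -
  define g where "g = gcd e1 e2"
  define D1 where "D1 = e1 div g"
  define D2 where "D2 = e2 div g"
  have g_pos: "g > 0" using pos by (simp add: g_def)
  have e1_eq: "e1 = g * D1" and e2_eq: "e2 = g * D2" unfolding D1_def D2_def g_def by simp_all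
  have cop: "coprime D1 D2" unfolding D1_def D2_def g_def by (rule div_gcd_coprime) (use pos in auto)
  have "g * D1 dvd g * (D2 * (r - 1))" using div2 unfolding e1_eq e2_eq by (simp add: mult.assoc)
  hence "D1 dvd r - 1" using g_pos cop by (simp add: coprime_dvd_mult_right_iff)
  moreover have "coprime 2 D1" using odd_D1 by (simp add: D1_def g_def)
  ultimately show "2 * (e1 div gcd e1 e2) dvd r - 1"
    using r_odd divides_mult[of 2 "r - 1" D1] unfolding D1_def g_def by simp
  have "g * (2 * D2) dvd g * (D1 * (r + 1))" using div1 unfolding e1_eq e2_eq by (simp add: algebra_simps)
  hence "2 * D2 dvd D1 * (r + 1)" using g_pos by simp
  moreover have "coprime (2 * D2) D1" using odd_D1 cop by (simp add: D1_def g_def coprime_commute)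
  ultimately show "2 * (e2 div gcd e1 e2) dvd r + 1"
    unfolding D2_def g_def using coprime_dvd_mult_right_iff by blast
qed

section \<open>Products over cosets\<close>

lemma prod_coset_linear_factors:
  fixes beta zeta :: "'a::field"
  assumes inj: "inj_on (\<lambda>m. beta * zeta ^ m) {..<f}" and zf: "zeta ^ f = 1" and f0: "f > 0"
  shows "(\<Prod>m<f. [:-(beta * zeta ^ m), 1:]) = Polynomial.monom 1 f - [:beta ^ f:]"
proof (rule poly_eqI_degree_lead_coeff[of _ f _ "(\<lambda>m. beta * zeta ^ m) ` {..<f}"])
  show "coeff (\<Prod>m<f. [:-(beta * zeta ^ m), 1:]) f = coeff (Polynomial.monom 1 f - [:beta ^ f:]) f"
  proof -
    have "lead_coeff (\<Prod>m<f. [:-(beta * zeta ^ m), 1:]) = 1" by (simp add: lead_coeff_prod)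
    moreover have "degree (\<Prod>m<f. [:-(beta * zeta ^ m), 1:]) = f" by (subst degree_prod_sum_eq) auto
    ultimately show ?thesis using f0 by (cases f) auto
  qed
  show "f \<le> card ((\<lambda>m. beta * zeta ^ m) ` {..<f})" using card_image[OF inj] by simp
  show "degree (\<Prod>m<f. [:-(beta * zeta ^ m), 1:]) \<le> f" by (subst degree_prod_sum_eq) auto
  show "degree (Polynomial.monom 1 f - [:beta ^ f:]) \<le> f"
    by (rule order.trans[OF degree_diff_le_max]) (auto simp: degree_monom_eq)
  fix z assume "z \<in> (\<lambda>m. beta * zeta ^ m) ` {..<f}"
  then obtain m where m: "m < f" "z = beta * zeta ^ m" by auto
  have "poly (\<Prod>m<f. [:-(beta * zeta ^ m), 1:]) z = 0"
    using m by (auto simp: poly_prod prod_zero_iff)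
  moreover have "z ^ f = beta ^ f"
    using m zf by (simp add: power_mult_distrib flip: power_mult) (simp add: mult.commute[of m] power_mult)
  ultimately show "poly (\<Prod>m<f. [:-(beta * zeta ^ m), 1:]) z = poly (Polynomial.monom 1 f - [:beta ^ f:]) z"
    by (simp add: poly_monom)
qed

lemma prod_coset_diff:
  fixes beta zeta :: "'a::field"
  assumes "inj_on (\<lambda>m. beta * zeta ^ m) {..<f}" "zeta ^ f = 1" "f > 0"
  shows "(\<Prod>m<f. x - beta * zeta ^ m) = x ^ f - beta ^ f"
  using arg_cong[OF prod_coset_linear_factors[OF assms], of "\<lambda>p. poly p x"] by (simp add: poly_prod poly_monom)

text \<open>Evaluate the derivative of \<open>\<Prod>m<f. (X - \<beta> \<zeta>^m) = X^f - \<beta>^f\<close> at \<open>\<beta> \<zeta>^m0\<close>.\<close>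

lemma prod_coset_diff_remove:
  fixes beta zeta :: "'a::field"
  assumes "inj_on (\<lambda>m. beta * zeta ^ m) {..<f}" "zeta ^ f = 1" "f > 0"
    and m0: "m0 < f"
  shows "(\<Prod>m\<in>{..<f}-{m0}. beta * zeta ^ m0 - beta * zeta ^ m) = of_nat f * (beta * zeta ^ m0) ^ (f - 1)"
proof -
  define x0 where "x0 = beta * zeta ^ m0"
  have "poly (pderiv (\<Prod>m<f. [:-(beta * zeta ^ m), 1:])) x0 = poly (pderiv (Polynomial.monom 1 f - [:beta ^ f:])) x0"
    by (simp only: prod_coset_linear_factors[OF assms(1-3)])
  also have "\<dots> = of_nat f * x0 ^ (f - 1)"
    by (simp add: pderiv_diff pderiv_monom poly_monom)
  also have "pderiv (\<Prod>m<f. [:-(beta * zeta ^ m), 1:]) =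
      (\<Sum>a<f. (\<Prod>m\<in>{..<f}-{a}. [:-(beta * zeta ^ m), 1:]) * pderiv [:-(beta * zeta ^ a), 1:])"
    by (rule pderiv_prod)
  also have "poly \<dots> x0 = (\<Sum>a<f. \<Prod>m\<in>{..<f}-{a}. x0 - beta * zeta ^ m)"
    by (simp add: poly_sum poly_prod pderiv_pCons)
  also have "\<dots> = (\<Sum>a\<in>{m0}. \<Prod>m\<in>{..<f}-{a}. x0 - beta * zeta ^ m)"
  proof (rule sum.mono_neutral_right)
    show "\<forall>a\<in>{..<f} - {m0}. (\<Prod>m\<in>{..<f} - {a}. x0 - beta * zeta ^ m) = 0"
      using m0 by (auto simp: x0_def prod_zero_iff intro!: bexI[of _ m0])
  qed (use m0 in auto)
  finally show ?thesis by (simp add: x0_def)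
qed

lemma prod_UNION_remove:
  assumes fin: "finite I" "\<And>i. i \<in> I \<Longrightarrow> finite (S i)"
    and disj: "\<And>i j. i \<in> I \<Longrightarrow> j \<in> I \<Longrightarrow> i \<noteq> j \<Longrightarrow> S i \<inter> S j = {}"
    and i0: "i0 \<in> I" and x: "x \<in> S i0"
  shows "(\<Prod>y\<in>(\<Union>i\<in>I. S i) - {x}. F y) = (\<Prod>y\<in>S i0 - {x}. F y) * (\<Prod>i\<in>I-{i0}. \<Prod>y\<in>S i. F y)"
proof -
  have eq: "(\<Union>i\<in>I. S i) - {x} = (S i0 - {x}) \<union> (\<Union>i\<in>I-{i0}. S i)"
    using disj i0 x by blast
  have d: "(S i0 - {x}) \<inter> (\<Union>i\<in>I-{i0}. S i) = {}" using disj i0 by blast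
  have "(\<Prod>y\<in>(\<Union>i\<in>I. S i) - {x}. F y) = (\<Prod>y\<in>S i0 - {x}. F y) * (\<Prod>y\<in>(\<Union>i\<in>I-{i0}. S i). F y)"
    unfolding eq using fin i0 d by (intro prod.union_disjoint) auto
  also have "(\<Prod>y\<in>(\<Union>i\<in>I-{i0}. S i). F y) = (\<Prod>i\<in>I-{i0}. \<Prod>y\<in>S i. F y)"
    using fin disj by (intro prod.UNION_disjoint) auto
  finally show ?thesis .
qed

section \<open>The evaluation set\<close>

text \<open>The evaluation set is the union of \<open>s\<close> cosets \<open>w^(g i) \<langle>w^e1\<rangle>\<close> of the subgroup of order
  \<open>f1\<close> and \<open>t\<close> cosets \<open>w^(G + g j) \<langle>w^e2\<rangle>\<close> of the subgroup of order \<open>f2\<close>, for a primitive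
  element \<open>w\<close>. In the application \<open>g = gcd e1 e2\<close>, \<open>D1 = e1/g\<close>, \<open>D2 = e2/g\<close>, \<open>R2 = (r+1)/2\<close>
  and \<open>h = (q-1)/2\<close>; \<open>K\<close>, \<open>L\<close> and \<open>c0\<close> are the cofactors in \<open>2 D2 | r+1\<close>, \<open>2 D1 | r-1\<close>
  and \<open>e1 | e2 (r-1)\<close>.\<close>

locale coset_nodes =
  fixes w :: "'a::{finite,field}" and q r e1 e2 f1 f2 g G D1 D2 K L R2 h c0 s t :: nat
  assumes card_UNIV: "card (UNIV::'a set) = q" and q_def: "q = r^2" and r_pp: "prime_power r"
    and w_nonzero: "w \<noteq> 0" and w_generates: "\<forall>x. x \<noteq> 0 \<longrightarrow> (\<exists>i. x = w ^ i)"
    and w_power_eq_1_iff: "\<forall>n. w ^ n = 1 \<longleftrightarrow> (q - 1) dvd n"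
    and fact1: "q - 1 = e1 * f1" and fact2: "q - 1 = e2 * f2"
    and e1_eq: "e1 = g * D1" and e2_eq: "e2 = g * D2"
    and g_eq: "g = 2 * G" and even_G: "even G" and G_pos: "G > 0"
    and r_plus_1_eq: "r + 1 = 2 * R2" and R2_eq: "R2 = D2 * K" and r_minus_1_eq: "r - 1 = 2 * D1 * L"
    and h_eq: "h = (r - 1) * R2" and q_minus_1_eq: "q - 1 = 2 * h"
    and c0_eq: "e2 * (r - 1) = e1 * c0"
    and odd_D1: "odd D1" and s_le_D1: "s \<le> D1" and t_le_D2: "t \<le> D2" and r_ge_3: "r \<ge> 3"
begin

lemma q_minus_1_pos: "q - 1 > 0"
proof -
  have "(3::nat) ^ 2 \<le> r ^ 2" using r_ge_3 by (rule power_mono) simp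
  thus ?thesis using q_def by simp
qed

lemma h_pos: "h > 0" using q_minus_1_pos q_minus_1_eq by simp
lemma h_less: "h < q - 1" using q_minus_1_pos q_minus_1_eq by simp
lemma f1_pos: "f1 > 0" and f2_pos: "f2 > 0" and e1_pos: "e1 > 0" and e2_pos: "e2 > 0"
proof -
  have "0 < e1 * f1" using q_minus_1_pos unfolding fact1 .
  moreover have "0 < e2 * f2" using q_minus_1_pos unfolding fact2 .
  ultimately show "f1 > 0" "f2 > 0" "e1 > 0" "e2 > 0" by simp_all
qed
lemma g_pos: "g > 0"
  using e1_pos e1_eq by (auto simp: nat_0_less_mult_iff)

lemma w_power_eq_1: "(q - 1) dvd n \<Longrightarrow> w ^ n = 1" using w_power_eq_1_iff by blast

lemma w_power_q_minus_1_mult: "w ^ ((q - 1) * c) = 1" by (rule w_power_eq_1) simp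

lemma w_power_mod: "w ^ n = w ^ (n mod (q - 1))"
proof -
  have "w ^ n = w ^ ((q - 1) * (n div (q - 1))) * w ^ (n mod (q - 1))" by (simp flip: power_add)
  also have "w ^ ((q - 1) * (n div (q - 1))) = 1" by (rule w_power_eq_1) simp
  finally show ?thesis by simp
qed

lemma w_power_inj: assumes "a < q - 1" "b < q - 1" "w ^ a = w ^ b" shows "a = b"
proof -
  have *: "a = b" if ab: "a \<le> b" "a < q - 1" "b < q - 1" "w ^ a = w ^ b" for a b
  proof -
    have "w ^ a * w ^ (b - a) = w ^ (a + (b - a))" by (simp add: power_add)
    also have "a + (b - a) = b" using ab by simp
    finally have "w ^ a * w ^ (b - a) = w ^ a * 1" using ab by simp
    hence "w ^ (b - a) = 1" using w_nonzero by simp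
    hence "(q - 1) dvd (b - a)" using w_power_eq_1_iff by blast
    moreover have "b - a < q - 1" using ab by linarith
    ultimately have "b - a = 0" by (cases "b - a = 0") (auto dest: dvd_imp_le)
    thus ?thesis using ab by simp
  qed
  show ?thesis using *[of a b] *[of b a] assms by (cases "a \<le> b") auto
qed

lemma w_power_eq_imp_mod_eq: "w ^ a = w ^ b \<Longrightarrow> a mod (q - 1) = b mod (q - 1)"
  using w_power_inj[of "a mod (q - 1)" "b mod (q - 1)"] w_power_mod[of a] w_power_mod[of b] q_minus_1_pos by simp

lemma w_power_h: "w ^ h = -1"
proof -
  have "(w ^ h - 1) * (w ^ h + 1) = w ^ (2 * h) - 1" by (simp add: algebra_simps power_mult power2_eq_square)
  also have "w ^ (2 * h) = 1" using q_minus_1_eq by (intro w_power_eq_1) simp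
  finally have "w ^ h = 1 \<or> w ^ h = -1" by (simp add: eq_neg_iff_add_eq_0)
  moreover have "w ^ h \<noteq> 1"
  proof
    assume "w ^ h = 1"
    hence "(q - 1) dvd h" using w_power_eq_1_iff by blast
    thus False using h_pos h_less by (auto dest: dvd_imp_le)
  qed
  ultimately show ?thesis by blast
qed

lemma w_power_h_mult: "w ^ (h * c) = (-1) ^ c"
  by (simp add: power_mult w_power_h)

lemma frobenius_diff_r: "(x - y) ^ r = x ^ r - (y::'a) ^ r"
  using frobenius_diff[OF card_UNIV[unfolded q_def] pos2 r_pp] .

lemma r_minus_1_pos: "r - 1 > 0" using r_ge_3 by simp

lemma power_h_eq_1_if_power_r_eq_self: assumes "x ^ r = x" "x \<noteq> 0" shows "x ^ h = (1::'a)"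
proof -
  have rr: "r = Suc (r - 1)" using r_minus_1_pos by simp
  have "x ^ (r - 1) * x = x" using assms(1) by (subst (asm) rr) (simp only: power_Suc2)
  hence "x ^ (r - 1) = 1" using assms(2) by simp
  thus ?thesis by (simp add: h_eq power_mult)
qed

lemma diff_power_h_subfield: assumes "x ^ (r - 1) = 1" "y ^ (r - 1) = 1" "x \<noteq> y" shows "(x - y) ^ h = (1::'a)"
proof -
  have rr: "r = Suc (r - 1)" using r_minus_1_pos by simp
  have "x ^ r = x" using assms(1) by (subst rr) (simp only: power_Suc2, simp)
  moreover have "y ^ r = y" using assms(2) by (subst rr) (simp only: power_Suc2, simp)
  ultimately have "(x - y) ^ r = x - y" by (simp add: frobenius_diff_r)
  thus ?thesis using power_h_eq_1_if_power_r_eq_self assms(3) by simp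
qed

lemma power_r_eq_self_if_square_eq_1: assumes "(a::'a) ^ 2 = 1" shows "a ^ r = a"
proof -
  have "r = 2 * (R2 - 1) + 1" using r_plus_1_eq r_ge_3 by linarith
  thus ?thesis using assms by (simp add: power_add power_mult)
qed

lemma power_Suc_r_eq_1D: "(x::'a) ^ (r + 1) = 1 \<Longrightarrow> x ^ r * x = 1"
  by (simp add: power_Suc2[symmetric])

text \<open>For \<open>x, y\<close> in the subgroup of order \<open>r + 1\<close>, Frobenius gives
  \<open>(x - y)^r = x^r - y^r = -(x^r y^r) (x - y)\<close>, using \<open>x^r = 1/x\<close> and \<open>y^r = 1/y\<close>.\<close>

lemma diff_power_r_minus_1_norm_one:
  assumes x: "x ^ (r + 1) = 1" and y: "y ^ (r + 1) = 1" and xy: "x \<noteq> y"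
  shows "(x - y) ^ (r - 1) = - (x ^ r * y ^ r :: 'a)"
proof -
  have r: "r = Suc (r - 1)" using r_minus_1_pos by simp
  have "(x - y) ^ (r - 1) * (x - y) = (x - y) ^ r" by (subst (2) r) (simp only: power_Suc2)
  also have "\<dots> = x ^ r * (y ^ r * y) - y ^ r * (x ^ r * x)"
    by (simp only: frobenius_diff_r power_Suc_r_eq_1D[OF x] power_Suc_r_eq_1D[OF y] mult_1_right)
  also have "\<dots> = - (x ^ r * y ^ r) * (x - y)" by (simp add: algebra_simps)
  finally show ?thesis using xy by (simp only: mult_cancel_right right_minus_eq) simp
qed

lemma power_r_power_R2_norm_one:
  assumes "(x::'a) ^ (r + 1) = 1" shows "(x ^ r) ^ R2 = x ^ R2"
proof -
  have "(x ^ R2) ^ 2 = x ^ (r + 1)" by (simp only: r_plus_1_eq power_mult mult.commute)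
  hence "(x ^ R2) ^ 2 = 1" using assms by simp
  hence "(x ^ R2) ^ r = x ^ R2" by (rule power_r_eq_self_if_square_eq_1)
  thus ?thesis by (simp flip: power_mult add: mult.commute)
qed

lemma diff_power_h_norm_one:
  assumes x: "x ^ (r + 1) = 1" and y: "y ^ (r + 1) = 1" and "x \<noteq> y"
  shows "(x - y) ^ h = ((-1) ^ R2 * x ^ R2 * y ^ R2 :: 'a)"
proof -
  have "(x - y) ^ h = (- (x ^ r * y ^ r)) ^ R2"
    unfolding h_eq power_mult diff_power_r_minus_1_norm_one[OF assms] ..
  also have "\<dots> = (-1) ^ R2 * ((x ^ r) ^ R2 * (y ^ r) ^ R2)"
    by (subst power_minus) (simp only: power_mult_distrib)
  finally show ?thesis
    by (simp add: power_r_power_R2_norm_one[OF x] power_r_power_R2_norm_one[OF y] mult.assoc)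
qed

lemma square_if_power_h_eq_1: assumes "x \<noteq> 0" "x ^ h = 1" shows "\<exists>y. y ^ 2 = (x::'a)"
proof -
  obtain i where i: "x = w ^ i" using w_generates assms(1) by blast
  have "w ^ (i * h) = 1" using assms(2) i by (simp add: power_mult)
  hence "(q - 1) dvd (i * h)" using w_power_eq_1_iff by blast
  hence "h * 2 dvd h * i" using q_minus_1_eq by (simp add: mult.commute)
  hence "2 dvd i" using h_pos by (simp add: nat_mult_dvd_cancel_disj)
  then obtain j where "i = 2 * j" by auto
  thus ?thesis using i by (intro exI[of _ "w ^ j"]) (simp add: power_mult mult.commute)
qed

lemma of_nat_power_r: "(of_nat n :: 'a) ^ r = of_nat n"
proof (induction n)
  case 0 show ?case using r_ge_3 by simp
next
  case (Suc n)
  have "(of_nat (Suc n) :: 'a) ^ r = (of_nat n + 1) ^ r" by (simp add: add.commute)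
  also have "\<dots> = of_nat n ^ r + 1 ^ r" by (rule frobenius_add[OF card_UNIV[unfolded q_def] pos2 r_pp])
  finally show ?case using Suc by simp
qed

lemma of_nat_power_h: assumes "n dvd (q - 1)" "n > 0" shows "(of_nat n :: 'a) ^ h = 1"
proof -
  have "(of_nat n :: 'a) \<noteq> 0"
  proof
    assume n0: "(of_nat n :: 'a) = 0"
    obtain c where c: "q - 1 = n * c" using assms(1) by auto
    have "(of_nat (q - 1) :: 'a) = 0" using n0 c by simp
    moreover have "(of_nat q :: 'a) = 0" using of_nat_card_UNIV_eq_0[where 'a='a] card_UNIV by simp
    moreover have "(of_nat q :: 'a) = of_nat (q - 1) + 1"
    proof -
      have "q = Suc (q - 1)" using q_minus_1_pos by simp
      hence "(of_nat q :: 'a) = of_nat (Suc (q - 1))" by (rule arg_cong)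
      thus ?thesis by simp
    qed
    ultimately show False by simp
  qed
  thus ?thesis using power_h_eq_1_if_power_r_eq_self of_nat_power_r by blast
qed

lemma G_less_g: "G < g" using g_eq G_pos by simp

lemma exp1_less: assumes "i < D1" "m < f1" shows "g * i + e1 * m < q - 1"
proof -
  have "g * i < e1" using assms(1) g_pos e1_eq by simp
  moreover have "e1 * m + e1 \<le> e1 * f1" using assms(2) mult_le_mono2[of "Suc m" f1 e1] by simp
  ultimately show ?thesis using fact1 by linarith
qed

lemma exp2_less: assumes "j < D2" "m < f2" shows "G + g * j + e2 * m < q - 1"
proof -
  have "G + g * j < g * (Suc j)" using G_less_g by simp
  also have "g * Suc j \<le> e2" using assms(1) e2_eq mult_le_mono2[of "Suc j" D2 g] by simp
  finally have "G + g * j < e2" .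
  moreover have "e2 * m + e2 \<le> e2 * f2" using assms(2) mult_le_mono2[of "Suc m" f2 e2] by simp
  ultimately show ?thesis using fact2 by linarith
qed

lemma exp1_inj: assumes "i < D1" "i' < D1" "g * i + e1 * m = g * i' + e1 * m'"
  shows "i = i' \<and> m = m'"
proof -
  have a: "g * i < e1" "g * i' < e1" using assms(1,2) g_pos e1_eq by simp_all
  have "(g * i + e1 * m) mod e1 = g * i" "(g * i' + e1 * m') mod e1 = g * i'" using a by simp_all
  hence "g * i = g * i'" using assms(3) by simp
  hence "i = i'" using g_pos by simp
  moreover have "m = m'" using assms(3) \<open>g * i = g * i'\<close> e1_pos by simp
  ultimately show ?thesis by simp
qed

lemma exp2_inj: assumes "j < D2" "j' < D2" "G + g * j + e2 * m = G + g * j' + e2 * m'"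
  shows "j = j' \<and> m = m'"
proof -
  have "g * j < e2" "g * j' < e2" using assms(1,2) g_pos e2_eq by simp_all
  hence a: "g * j < e2" "g * j' < e2" by simp_all
  have "g * j + e2 * m = g * j' + e2 * m'" using assms(3) by simp
  hence "(g * j + e2 * m) mod e2 = (g * j' + e2 * m') mod e2" by simp
  hence "g * j = g * j'" using a by simp
  hence "j = j'" using g_pos by simp
  moreover have "m = m'" using assms(3) \<open>g * j = g * j'\<close> e2_pos by simp
  ultimately show ?thesis by simp
qed

lemma exp1_ne_exp2: "g * a + e1 * b \<noteq> G + g * c + e2 * d"
proof
  assume h: "g * a + e1 * b = G + g * c + e2 * d"
  have "G * (2 * (a + D1 * b)) = G * (2 * (c + D2 * d) + 1)"
    using h unfolding e1_eq e2_eq g_eq by (simp add: algebra_simps)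
  hence "2 * (a + D1 * b) = 2 * (c + D2 * d) + 1" using G_pos by (subst (asm) mult_left_cancel) auto
  thus False by presburger
qed

definition elt1 :: "nat \<Rightarrow> nat \<Rightarrow> 'a" where "elt1 i m = w ^ (g * i) * (w ^ e1) ^ m"
definition elt2 :: "nat \<Rightarrow> nat \<Rightarrow> 'a" where "elt2 j m = w ^ (G + g * j) * (w ^ e2) ^ m"

lemma elt1_eq_w_power: "elt1 i m = w ^ (g * i + e1 * m)" by (simp add: elt1_def power_add power_mult)
lemma elt2_eq_w_power: "elt2 j m = w ^ (G + g * j + e2 * m)" by (simp add: elt2_def power_add power_mult)

lemma elt1_inj: "i < D1 \<Longrightarrow> i' < D1 \<Longrightarrow> m < f1 \<Longrightarrow> m' < f1 \<Longrightarrow> elt1 i m = elt1 i' m' \<Longrightarrow> i = i' \<and> m = m'"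
  unfolding elt1_eq_w_power by (rule exp1_inj, assumption+) (rule w_power_inj[OF exp1_less exp1_less], assumption+)

lemma elt2_inj: "j < D2 \<Longrightarrow> j' < D2 \<Longrightarrow> m < f2 \<Longrightarrow> m' < f2 \<Longrightarrow> elt2 j m = elt2 j' m' \<Longrightarrow> j = j' \<and> m = m'"
  unfolding elt2_eq_w_power by (rule exp2_inj, assumption+) (rule w_power_inj[OF exp2_less exp2_less], assumption+)

lemma elt1_ne_elt2: "i < D1 \<Longrightarrow> m < f1 \<Longrightarrow> j < D2 \<Longrightarrow> m' < f2 \<Longrightarrow> elt1 i m \<noteq> elt2 j m'"
  unfolding elt1_eq_w_power elt2_eq_w_power using w_power_inj[OF exp1_less exp2_less] exp1_ne_exp2 by blast

lemma elt1_nonzero: "elt1 i m \<noteq> 0" by (simp add: elt1_def w_nonzero)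
lemma elt2_nonzero: "elt2 j m \<noteq> 0" by (simp add: elt2_def w_nonzero)

definition coset1 :: "nat \<Rightarrow> 'a set" where "coset1 i = elt1 i ` {..<f1}"
definition coset2 :: "nat \<Rightarrow> 'a set" where "coset2 j = elt2 j ` {..<f2}"
definition cosets1 :: "'a set" where "cosets1 = (\<Union>i<s. coset1 i)"
definition cosets2 :: "'a set" where "cosets2 = (\<Union>j<t. coset2 j)"
definition nodes :: "'a set" where "nodes = cosets1 \<union> cosets2"

lemma coset1_disjoint: "i < s \<Longrightarrow> i' < s \<Longrightarrow> i \<noteq> i' \<Longrightarrow> coset1 i \<inter> coset1 i' = {}"
  using elt1_inj s_le_D1 by (fastforce simp: coset1_def)
lemma coset2_disjoint: "j < t \<Longrightarrow> j' < t \<Longrightarrow> j \<noteq> j' \<Longrightarrow> coset2 j \<inter> coset2 j' = {}"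
  using elt2_inj t_le_D2 by (fastforce simp: coset2_def)
lemma cosets1_cosets2_disjoint: "cosets1 \<inter> cosets2 = {}"
  using elt1_ne_elt2 s_le_D1 t_le_D2 by (fastforce simp: cosets1_def cosets2_def coset1_def coset2_def)

lemma inj_on_elt1: "i < D1 \<Longrightarrow> inj_on (elt1 i) {..<f1}"
  using elt1_inj by (auto simp: inj_on_def)
lemma inj_on_elt2: "j < D2 \<Longrightarrow> inj_on (elt2 j) {..<f2}"
  using elt2_inj by (auto simp: inj_on_def)

lemma card_cosets1: "card cosets1 = s * f1"
proof -
  have "cosets1 = (\<lambda>(i, m). elt1 i m) ` ({..<s} \<times> {..<f1})" by (auto simp: cosets1_def coset1_def)
  moreover have "inj_on (\<lambda>(i, m). elt1 i m) ({..<s} \<times> {..<f1})"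
  proof (rule inj_onI)
    fix p p' assume p: "p \<in> {..<s} \<times> {..<f1}" "p' \<in> {..<s} \<times> {..<f1}"
      "(\<lambda>(i, m). elt1 i m) p = (\<lambda>(i, m). elt1 i m) p'"
    obtain i m i' m' where "p = (i, m)" "p' = (i', m')" by (cases p, cases p') auto
    thus "p = p'" using p elt1_inj[of i i' m m'] s_le_D1 by auto
  qed
  ultimately show ?thesis by (simp add: card_image card_cartesian_product)
qed

lemma card_cosets2: "card cosets2 = t * f2"
proof -
  have "cosets2 = (\<lambda>(j, m). elt2 j m) ` ({..<t} \<times> {..<f2})" by (auto simp: cosets2_def coset2_def)
  moreover have "inj_on (\<lambda>(j, m). elt2 j m) ({..<t} \<times> {..<f2})"
  proof (rule inj_onI)
    fix p p' assume p: "p \<in> {..<t} \<times> {..<f2}" "p' \<in> {..<t} \<times> {..<f2}"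
      "(\<lambda>(j, m). elt2 j m) p = (\<lambda>(j, m). elt2 j m) p'"
    obtain j m j' m' where "p = (j, m)" "p' = (j', m')" by (cases p, cases p') auto
    thus "p = p'" using p elt2_inj[of j j' m m'] t_le_D2 by auto
  qed
  ultimately show ?thesis by (simp add: card_image card_cartesian_product)
qed

lemma finite_nodes: "finite nodes" by (simp add: nodes_def cosets1_def cosets2_def coset1_def coset2_def)

lemma card_nodes: "card nodes = s * f1 + t * f2"
  unfolding nodes_def using cosets1_cosets2_disjoint card_cosets1 card_cosets2
  by (subst card_Un_disjoint) (auto simp: cosets1_def cosets2_def coset1_def coset2_def)

lemma zero_notin_nodes: "0 \<notin> nodes"
  using elt1_nonzero elt2_nonzero by (auto simp: nodes_def cosets1_def cosets2_def coset1_def coset2_def)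

lemma w_power_q_minus_1: "w ^ (q - 1) = 1" by (rule w_power_eq_1) simp

lemma elt1_fun: "elt1 i = (\<lambda>m. w ^ (g * i) * (w ^ e1) ^ m)" by (simp add: fun_eq_iff elt1_def)
lemma elt2_fun: "elt2 j = (\<lambda>m. w ^ (G + g * j) * (w ^ e2) ^ m)" by (simp add: fun_eq_iff elt2_def)
lemma w_e1_power_f1: "(w ^ e1) ^ f1 = 1" using w_power_q_minus_1 fact1 by (simp flip: power_mult)
lemma w_e2_power_f2: "(w ^ e2) ^ f2 = 1" using w_power_q_minus_1 fact2 by (simp flip: power_mult)

lemma prod_coset1_diff: "i < s \<Longrightarrow> (\<Prod>y\<in>coset1 i. x - y) = x ^ f1 - (w ^ (g * i)) ^ f1"
  unfolding coset1_def using s_le_D1 inj_on_elt1[of i]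
  by (subst prod.reindex) (auto simp: elt1_fun intro!: prod_coset_diff w_e1_power_f1 f1_pos)

lemma prod_coset2_diff: "j < t \<Longrightarrow> (\<Prod>y\<in>coset2 j. x - y) = x ^ f2 - (w ^ (G + g * j)) ^ f2"
  unfolding coset2_def using t_le_D2 inj_on_elt2[of j]
  by (subst prod.reindex) (auto simp: elt2_fun intro!: prod_coset_diff w_e2_power_f2 f2_pos)

lemma prod_coset1_diff_remove: assumes "i0 < s" "m0 < f1"
  shows "(\<Prod>y\<in>coset1 i0 - {elt1 i0 m0}. elt1 i0 m0 - y) = of_nat f1 * (elt1 i0 m0) ^ (f1 - 1)"
proof -
  have inj: "inj_on (elt1 i0) {..<f1}" using assms s_le_D1 inj_on_elt1 by simp
  have "coset1 i0 - {elt1 i0 m0} = elt1 i0 ` ({..<f1} - {m0})"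
    unfolding coset1_def using inj assms by (auto simp: inj_on_def)
  hence "(\<Prod>y\<in>coset1 i0 - {elt1 i0 m0}. elt1 i0 m0 - y) = (\<Prod>m\<in>{..<f1} - {m0}. elt1 i0 m0 - elt1 i0 m)"
    using inj by (simp add: prod.reindex inj_on_subset[OF inj])
  also have "\<dots> = of_nat f1 * (elt1 i0 m0) ^ (f1 - 1)"
    using prod_coset_diff_remove[of "w ^ (g * i0)" "w ^ e1" f1 m0] inj w_e1_power_f1 f1_pos assms
    by (simp add: elt1_fun)
  finally show ?thesis .
qed

lemma prod_coset2_diff_remove: assumes "j0 < t" "m0 < f2"
  shows "(\<Prod>y\<in>coset2 j0 - {elt2 j0 m0}. elt2 j0 m0 - y) = of_nat f2 * (elt2 j0 m0) ^ (f2 - 1)"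
proof -
  have inj: "inj_on (elt2 j0) {..<f2}" using assms t_le_D2 inj_on_elt2 by simp
  have "coset2 j0 - {elt2 j0 m0} = elt2 j0 ` ({..<f2} - {m0})"
    unfolding coset2_def using inj assms by (auto simp: inj_on_def)
  hence "(\<Prod>y\<in>coset2 j0 - {elt2 j0 m0}. elt2 j0 m0 - y) = (\<Prod>m\<in>{..<f2} - {m0}. elt2 j0 m0 - elt2 j0 m)"
    using inj by (simp add: prod.reindex inj_on_subset[OF inj])
  also have "\<dots> = of_nat f2 * (elt2 j0 m0) ^ (f2 - 1)"
    using prod_coset_diff_remove[of "w ^ (G + g * j0)" "w ^ e2" f2 m0] inj w_e2_power_f2 f2_pos assms
    by (simp add: elt2_fun)
  finally show ?thesis .
qed

lemma finite_coset1: "finite (coset1 i)" by (simp add: coset1_def)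
lemma finite_coset2: "finite (coset2 j)" by (simp add: coset2_def)

lemma diff_prod_nodes_elt1: assumes "i0 < s" "m0 < f1"
  shows "diff_prod nodes (elt1 i0 m0) = (of_nat f1 * (elt1 i0 m0) ^ (f1 - 1)) *
     (\<Prod>i\<in>{..<s}-{i0}. (elt1 i0 m0) ^ f1 - (w ^ (g * i)) ^ f1) *
     (\<Prod>j<t. (elt1 i0 m0) ^ f2 - (w ^ (G + g * j)) ^ f2)"
proof -
  let ?x = "elt1 i0 m0"
  have xA1: "?x \<in> cosets1" using assms by (auto simp: cosets1_def coset1_def)
  have "nodes - {?x} = (cosets1 - {?x}) \<union> cosets2" using xA1 cosets1_cosets2_disjoint by (auto simp: nodes_def)
  hence "diff_prod nodes ?x = (\<Prod>y\<in>(cosets1 - {?x}) \<union> cosets2. ?x - y)" unfolding diff_prod_def by simp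
  also have "\<dots> = (\<Prod>y\<in>cosets1 - {?x}. ?x - y) * (\<Prod>y\<in>cosets2. ?x - y)"
    by (rule prod.union_disjoint) (use cosets1_cosets2_disjoint in \<open>auto simp: cosets1_def cosets2_def finite_coset1 finite_coset2\<close>)
  also have "(\<Prod>y\<in>cosets1 - {?x}. ?x - y) = (\<Prod>y\<in>coset1 i0 - {?x}. ?x - y) * (\<Prod>i\<in>{..<s}-{i0}. \<Prod>y\<in>coset1 i. ?x - y)"
    unfolding cosets1_def using assms coset1_disjoint
    by (intro prod_UNION_remove) (auto simp: finite_coset1 coset1_def)
  also have "(\<Prod>i\<in>{..<s}-{i0}. \<Prod>y\<in>coset1 i. ?x - y) = (\<Prod>i\<in>{..<s}-{i0}. ?x ^ f1 - (w ^ (g * i)) ^ f1)"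
    by (intro prod.cong refl prod_coset1_diff) auto
  also have "(\<Prod>y\<in>cosets2. ?x - y) = (\<Prod>j<t. \<Prod>y\<in>coset2 j. ?x - y)"
    unfolding cosets2_def using coset2_disjoint by (intro prod.UNION_disjoint) (auto simp: finite_coset2)
  also have "\<dots> = (\<Prod>j<t. ?x ^ f2 - (w ^ (G + g * j)) ^ f2)"
    by (intro prod.cong refl prod_coset2_diff) auto
  finally show ?thesis using prod_coset1_diff_remove[OF assms] by simp
qed

lemma diff_prod_nodes_elt2: assumes "j0 < t" "m0 < f2"
  shows "diff_prod nodes (elt2 j0 m0) = (of_nat f2 * (elt2 j0 m0) ^ (f2 - 1)) *
     (\<Prod>j\<in>{..<t}-{j0}. (elt2 j0 m0) ^ f2 - (w ^ (G + g * j)) ^ f2) *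
     (\<Prod>i<s. (elt2 j0 m0) ^ f1 - (w ^ (g * i)) ^ f1)"
proof -
  let ?x = "elt2 j0 m0"
  have xA2: "?x \<in> cosets2" using assms by (auto simp: cosets2_def coset2_def)
  have "nodes - {?x} = (cosets2 - {?x}) \<union> cosets1" using xA2 cosets1_cosets2_disjoint by (auto simp: nodes_def)
  hence "diff_prod nodes ?x = (\<Prod>y\<in>(cosets2 - {?x}) \<union> cosets1. ?x - y)" unfolding diff_prod_def by simp
  also have "\<dots> = (\<Prod>y\<in>cosets2 - {?x}. ?x - y) * (\<Prod>y\<in>cosets1. ?x - y)"
    by (rule prod.union_disjoint) (use cosets1_cosets2_disjoint in \<open>auto simp: cosets1_def cosets2_def finite_coset1 finite_coset2\<close>)
  also have "(\<Prod>y\<in>cosets2 - {?x}. ?x - y) = (\<Prod>y\<in>coset2 j0 - {?x}. ?x - y) * (\<Prod>j\<in>{..<t}-{j0}. \<Prod>y\<in>coset2 j. ?x - y)"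
    unfolding cosets2_def using assms coset2_disjoint
    by (intro prod_UNION_remove) (auto simp: finite_coset2 coset2_def)
  also have "(\<Prod>j\<in>{..<t}-{j0}. \<Prod>y\<in>coset2 j. ?x - y) = (\<Prod>j\<in>{..<t}-{j0}. ?x ^ f2 - (w ^ (G + g * j)) ^ f2)"
    by (intro prod.cong refl prod_coset2_diff) auto
  also have "(\<Prod>y\<in>cosets1. ?x - y) = (\<Prod>i<s. \<Prod>y\<in>coset1 i. ?x - y)"
    unfolding cosets1_def using coset1_disjoint by (intro prod.UNION_disjoint) (auto simp: finite_coset1)
  also have "\<dots> = (\<Prod>i<s. ?x ^ f1 - (w ^ (g * i)) ^ f1)"
    by (intro prod.cong refl prod_coset1_diff) auto
  finally show ?thesis using prod_coset2_diff_remove[OF assms] by simp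
qed

lemma w_even_power_h: "(w ^ (2 * c)) ^ h = 1"
proof -
  have "(w ^ (2 * c)) ^ h = w ^ (2 * c * h)" by (simp only: power_mult)
  also have "2 * c * h = (q - 1) * c" using q_minus_1_eq by simp
  finally have e: "(w ^ (2 * c)) ^ h = w ^ ((q - 1) * c)" .
  have "w ^ ((q - 1) * c) = 1" by (rule w_power_eq_1) simp
  with e show ?thesis by simp
qed

lemma elt1_power_h: "(elt1 i m) ^ h = 1"
proof -
  have "g * i + e1 * m = 2 * (G * i + G * D1 * m)" unfolding e1_eq g_eq by (simp add: algebra_simps)
  hence "elt1 i m = w ^ (2 * (G * i + G * D1 * m))" by (simp only: elt1_eq_w_power)
  thus ?thesis by (simp only: w_even_power_h)
qed

lemma elt2_power_h: "(elt2 j m) ^ h = 1"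
proof -
  obtain G' where G': "G = 2 * G'" using even_G by auto
  have "G + g * j + e2 * m = 2 * (G' + G * j + G * D2 * m)" unfolding e2_eq g_eq G' by (simp add: algebra_simps)
  hence "elt2 j m = w ^ (2 * (G' + G * j + G * D2 * m))" by (simp only: elt2_eq_w_power)
  thus ?thesis by (simp only: w_even_power_h)
qed

lemma g_mult_less_e1: "i < D1 \<Longrightarrow> g * i < e1" using g_pos e1_eq by simp
lemma G_g_mult_less_e2: assumes "j < D2" shows "G + g * j < e2"
proof -
  have "G + g * j < g * (Suc j)" using G_less_g by simp
  also have "g * Suc j \<le> e2" using assms e2_eq mult_le_mono2[of "Suc j" D2 g] by simp
  finally show ?thesis .
qed

lemma w_power_mult_eq_imp_mod_eq: assumes "q - 1 = e * f" "f > 0" "w ^ (a * f) = w ^ (b * f)" shows "a mod e = b mod e"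
proof -
  have "(a * f) mod (e * f) = (b * f) mod (e * f)" using w_power_eq_imp_mod_eq[OF assms(3)] assms(1) by simp
  hence "(a mod e) * f = (b mod e) * f" by (simp add: mod_mult_mult2)
  thus ?thesis using assms(2) by simp
qed

lemma g_dvd_e1: "g dvd e1" and g_dvd_e2: "g dvd e2" using e1_eq e2_eq by auto

lemma mod_g_exp1: "(g * a + e1 * b) mod g = 0" using g_dvd_e1 by (auto simp: e1_eq)
lemma mod_g_exp2: "(G + g * a + e2 * b) mod g = G"
proof -
  have eq: "G + g * a + e2 * b = G + g * (a + D2 * b)" by (simp add: e2_eq algebra_simps)
  show ?thesis unfolding eq using G_less_g by simp
qed

lemma g_f1_r_minus_1_eq: "g * f1 * (r - 1) = (q - 1) * (2 * L)"
  unfolding fact1 e1_eq r_minus_1_eq by (simp add: algebra_simps)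
lemma g_f2_R2_eq: "g * f2 * R2 = (q - 1) * K"
  unfolding fact2 e2_eq R2_eq by (simp add: algebra_simps)
lemma e1_f2_R2_eq: "e1 * f2 * R2 = (q - 1) * (D1 * K)"
  unfolding fact2 e1_eq e2_eq R2_eq by (simp add: algebra_simps)
lemma G_f2_R2_eq: "G * f2 * R2 = h * K"
proof -
  have "2 * (G * f2 * R2) = 2 * (h * K)" using q_minus_1_eq unfolding fact2 e2_eq g_eq R2_eq by (simp add: algebra_simps)
  thus ?thesis by simp
qed
lemma G_f1_r_minus_1_eq: "G * f1 * (r - 1) = (q - 1) * L"
  unfolding fact1 e1_eq g_eq r_minus_1_eq by (simp add: algebra_simps)
lemma e2_f1_r_minus_1_eq: "e2 * f1 * (r - 1) = (q - 1) * c0"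
proof -
  have "e2 * f1 * (r - 1) = (e2 * (r - 1)) * f1" by (simp add: algebra_simps)
  also have "\<dots> = (q - 1) * c0" unfolding c0_eq fact1 by (simp add: algebra_simps)
  finally show ?thesis .
qed

lemma w_power_add_multiple: "(q - 1) dvd n \<Longrightarrow> w ^ (n + k) = w ^ k" using w_power_eq_1 by (simp add: power_add)

lemma w_power_coset2_R2: "(w ^ ((G + g * j) * f2)) ^ R2 = (-1) ^ K"
proof -
  have "(G + g * j) * f2 * R2 = G * f2 * R2 + (g * f2 * R2) * j" by (simp add: algebra_simps)
  also have "\<dots> = (q - 1) * (K * j) + h * K" unfolding G_f2_R2_eq g_f2_R2_eq by simp
  finally have ee: "(G + g * j) * f2 * R2 = (q - 1) * (K * j) + h * K" .
  have "(w ^ ((G + g * j) * f2)) ^ R2 = w ^ ((G + g * j) * f2 * R2)" by (simp only: power_mult)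
  hence "(w ^ ((G + g * j) * f2)) ^ R2 = w ^ ((q - 1) * (K * j) + h * K)" by (simp only: ee)
  also have "\<dots> = w ^ (h * K)" by (rule w_power_add_multiple) simp
  finally show ?thesis by (simp add: w_power_h_mult)
qed

lemma power_r_plus_1: "(x::'a) ^ (r + 1) = (x ^ R2) ^ 2"
proof -
  have "r + 1 = R2 * 2" using r_plus_1_eq by simp
  moreover have "(x ^ R2) ^ 2 = x ^ (R2 * 2)" by (rule power_mult[symmetric])
  ultimately show ?thesis by simp
qed

lemma of_nat_mult_power_h: assumes "n dvd (q - 1)" "n > 0" "(x::'a) ^ h = 1"
  shows "(of_nat n * x ^ (n - 1)) ^ h = (1::'a)"
proof -
  have "(x ^ (n - 1)) ^ h = x ^ ((n - 1) * h)" by (simp only: power_mult)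
  also have "\<dots> = x ^ (h * (n - 1))" by (simp only: mult.commute)
  also have "\<dots> = (x ^ h) ^ (n - 1)" by (simp only: power_mult)
  finally have "(x ^ (n - 1)) ^ h = 1" using assms(3) by simp
  thus ?thesis using of_nat_power_h[OF assms(1,2)] by (simp add: power_mult_distrib)
qed

lemma w_power_power: "(w ^ a) ^ b = w ^ (a * b)" by (simp only: power_mult)

lemma elt1_power_f1: "(elt1 i m) ^ f1 = w ^ (g * i * f1)"
proof -
  have "(elt1 i m) ^ f1 = w ^ ((g * i + e1 * m) * f1)" by (simp only: elt1_eq_w_power w_power_power)
  also have "(g * i + e1 * m) * f1 = (q - 1) * m + g * i * f1" unfolding fact1 by (simp add: algebra_simps)
  finally show ?thesis by (simp only: w_power_add_multiple dvd_triv_left)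
qed

lemma elt2_power_f2: "(elt2 j m) ^ f2 = w ^ ((G + g * j) * f2)"
proof -
  have "(elt2 j m) ^ f2 = w ^ ((G + g * j + e2 * m) * f2)" by (simp only: elt2_eq_w_power w_power_power)
  also have "(G + g * j + e2 * m) * f2 = (q - 1) * m + (G + g * j) * f2" unfolding fact2 by (simp add: algebra_simps)
  finally show ?thesis by (simp only: w_power_add_multiple dvd_triv_left)
qed

text \<open>In \<open>power_h_factor_ab\<close> the
  node \<open>x\<close> lies in family \<open>a\<close> and the coset in family \<open>b\<close>; the \<open>f1\<close>-th powers involved have order
  dividing \<open>r - 1\<close>, the \<open>f2\<close>-th powers order dividing \<open>r + 1\<close>.\<close>

lemma power_h_factor_11: assumes "i0 < s" "i < s" "i \<noteq> i0" "m0 < f1"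
  shows "((elt1 i0 m0) ^ f1 - (w ^ (g * i)) ^ f1) ^ h = 1"
proof -
  have x: "(w ^ (g * i0 * f1)) ^ (r - 1) = 1"
    unfolding w_power_power using g_f1_r_minus_1_eq by (intro w_power_eq_1) (metis dvd_triv_left mult.assoc mult.commute dvd_mult)
  have y: "(w ^ (g * i * f1)) ^ (r - 1) = 1"
    unfolding w_power_power using g_f1_r_minus_1_eq by (intro w_power_eq_1) (metis dvd_triv_left mult.assoc mult.commute dvd_mult)
  have lt: "g * k * f1 < q - 1" if "k < s" for k
  proof -
    have "g * k < e1" using g_mult_less_e1[of k] that s_le_D1 by simp
    thus ?thesis using f1_pos unfolding fact1 by simp
  qed
  have ne: "w ^ (g * i0 * f1) \<noteq> w ^ (g * i * f1)"
  proof
    assume "w ^ (g * i0 * f1) = w ^ (g * i * f1)"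
    hence "g * i0 * f1 = g * i * f1" using w_power_inj lt assms(1,2) by blast
    thus False using assms(3) g_pos f1_pos by simp
  qed
  show ?thesis unfolding elt1_power_f1 w_power_power using diff_power_h_subfield[OF x y ne] by (simp only: w_power_power)
qed

lemma neg_one_power_square: "((-1::'a) ^ K) ^ 2 = 1"
proof -
  have "((-1::'a) ^ K) ^ 2 = ((-1) ^ 2) ^ K" by (simp only: power_mult[symmetric] mult.commute)
  thus ?thesis by simp
qed

lemma power_h_factor_12: assumes "i0 < s" "m0 < f1" "j < t"
  shows "((elt1 i0 m0) ^ f2 - (w ^ (G + g * j)) ^ f2) ^ h = (-1) ^ R2 * (-1) ^ K"
proof -
  define x where "x = w ^ ((g * i0 + e1 * m0) * f2)"
  define y where "y = w ^ ((G + g * j) * f2)"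
  have bx: "(elt1 i0 m0) ^ f2 = x" unfolding x_def by (simp only: elt1_eq_w_power w_power_power)
  have by': "(w ^ (G + g * j)) ^ f2 = y" unfolding y_def by (simp only: w_power_power)
  have e: "(g * i0 + e1 * m0) * f2 * R2 = (q - 1) * (K * i0 + D1 * K * m0)"
  proof -
    have "(g * i0 + e1 * m0) * f2 * R2 = (g * f2 * R2) * i0 + (e1 * f2 * R2) * m0" by (simp add: algebra_simps)
    also have "\<dots> = (q - 1) * (K * i0 + D1 * K * m0)" unfolding g_f2_R2_eq e1_f2_R2_eq by (simp add: algebra_simps)
    finally show ?thesis .
  qed
  have xR: "x ^ R2 = 1" unfolding x_def w_power_power e by (rule w_power_q_minus_1_mult)
  have yR: "y ^ R2 = (-1) ^ K" unfolding y_def by (rule w_power_coset2_R2)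
  have x1: "x ^ (r + 1) = 1" unfolding power_r_plus_1 xR by simp
  have y1: "y ^ (r + 1) = 1" unfolding power_r_plus_1 yR by (rule neg_one_power_square)
  have ne: "x \<noteq> y"
  proof
    assume "x = y"
    hence "(g * i0 + e1 * m0) mod e2 = (G + g * j) mod e2"
      unfolding x_def y_def by (rule w_power_mult_eq_imp_mod_eq[OF fact2 f2_pos])
    hence "(g * i0 + e1 * m0) mod g = (G + g * j) mod g" using g_dvd_e2 by (metis mod_mod_cancel)
    thus False using mod_g_exp1 mod_g_exp2[of j 0] G_pos by simp
  qed
  show ?thesis unfolding bx by' using diff_power_h_norm_one[OF x1 y1 ne] xR yR by simp
qed

lemma power_h_factor_22: assumes "j0 < t" "j < t" "j \<noteq> j0" "m0 < f2"
  shows "((elt2 j0 m0) ^ f2 - (w ^ (G + g * j)) ^ f2) ^ h = (-1) ^ R2"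
proof -
  define x where "x = w ^ ((G + g * j0) * f2)"
  define y where "y = w ^ ((G + g * j) * f2)"
  have bx: "(elt2 j0 m0) ^ f2 = x" unfolding x_def by (rule elt2_power_f2)
  have by': "(w ^ (G + g * j)) ^ f2 = y" unfolding y_def by (simp only: w_power_power)
  have xR: "x ^ R2 = (-1) ^ K" unfolding x_def by (rule w_power_coset2_R2)
  have yR: "y ^ R2 = (-1) ^ K" unfolding y_def by (rule w_power_coset2_R2)
  have x1: "x ^ (r + 1) = 1" unfolding power_r_plus_1 xR by (rule neg_one_power_square)
  have y1: "y ^ (r + 1) = 1" unfolding power_r_plus_1 yR by (rule neg_one_power_square)
  have lt: "(G + g * k) * f2 < q - 1" if "k < t" for k
  proof -
    have "G + g * k < e2" using G_g_mult_less_e2[of k] that t_le_D2 by simp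
    thus ?thesis using f2_pos unfolding fact2 by simp
  qed
  have ne: "x \<noteq> y"
  proof
    assume "x = y"
    hence "(G + g * j0) * f2 = (G + g * j) * f2" unfolding x_def y_def using w_power_inj lt assms(1,2) by blast
    thus False using assms(3) g_pos f2_pos by simp
  qed
  have "((-1::'a) ^ K) * (-1) ^ K = 1" using neg_one_power_square by (simp add: power2_eq_square)
  thus ?thesis unfolding bx by' using diff_power_h_norm_one[OF x1 y1 ne] xR yR by (simp add: mult.assoc)
qed

lemma power_h_factor_21: assumes "j0 < t" "m0 < f2" "i < s"
  shows "((elt2 j0 m0) ^ f1 - (w ^ (g * i)) ^ f1) ^ h = 1"
proof -
  define x where "x = w ^ ((G + g * j0 + e2 * m0) * f1)"
  define y where "y = w ^ (g * i * f1)"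
  have bx: "(elt2 j0 m0) ^ f1 = x" unfolding x_def by (simp only: elt2_eq_w_power w_power_power)
  have by': "(w ^ (g * i)) ^ f1 = y" unfolding y_def by (simp only: w_power_power)
  have ex: "(G + g * j0 + e2 * m0) * f1 * (r - 1) = (q - 1) * (L + 2 * L * j0 + c0 * m0)"
  proof -
    have "(G + g * j0 + e2 * m0) * f1 * (r - 1) = G * f1 * (r - 1) + (g * f1 * (r - 1)) * j0 + (e2 * f1 * (r - 1)) * m0"
      by (simp add: algebra_simps)
    also have "\<dots> = (q - 1) * (L + 2 * L * j0 + c0 * m0)" unfolding G_f1_r_minus_1_eq g_f1_r_minus_1_eq e2_f1_r_minus_1_eq by (simp add: algebra_simps)
    finally show ?thesis .
  qed
  have ey: "g * i * f1 * (r - 1) = (q - 1) * (2 * L * i)"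
  proof -
    have "g * i * f1 * (r - 1) = (g * f1 * (r - 1)) * i" by (simp add: algebra_simps)
    also have "\<dots> = (q - 1) * (2 * L * i)" unfolding g_f1_r_minus_1_eq by (simp add: algebra_simps)
    finally show ?thesis .
  qed
  have x1: "x ^ (r - 1) = 1" unfolding x_def w_power_power ex by (rule w_power_q_minus_1_mult)
  have y1: "y ^ (r - 1) = 1" unfolding y_def w_power_power ey by (rule w_power_q_minus_1_mult)
  have ne: "x \<noteq> y"
  proof
    assume "x = y"
    hence "(G + g * j0 + e2 * m0) mod e1 = (g * i) mod e1"
      unfolding x_def y_def by (rule w_power_mult_eq_imp_mod_eq[OF fact1 f1_pos])
    hence "(G + g * j0 + e2 * m0) mod g = (g * i) mod g" using g_dvd_e1 by (metis mod_mod_cancel)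
    thus False using mod_g_exp2 G_pos by simp
  qed
  show ?thesis unfolding bx by' using diff_power_h_subfield[OF x1 y1 ne] .
qed

lemma f1_dvd: "f1 dvd (q - 1)" using fact1 by simp
lemma f2_dvd: "f2 dvd (q - 1)" using fact2 by simp

lemma diff_prod_elt1_power_h: assumes "i0 < s" "m0 < f1"
  shows "(diff_prod nodes (elt1 i0 m0)) ^ h = ((-1) ^ R2 * (-1) ^ K) ^ t"
proof -
  have o: "(of_nat f1 * (elt1 i0 m0) ^ (f1 - 1)) ^ h = 1" by (rule of_nat_mult_power_h[OF f1_dvd f1_pos elt1_power_h])
  have p1: "(\<Prod>i\<in>{..<s}-{i0}. (elt1 i0 m0) ^ f1 - (w ^ (g * i)) ^ f1) ^ h = 1"
    unfolding prod_power_distrib using power_h_factor_11 assms by (intro prod.neutral) auto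
  have p2: "(\<Prod>j<t. (elt1 i0 m0) ^ f2 - (w ^ (G + g * j)) ^ f2) ^ h = ((-1) ^ R2 * (-1) ^ K) ^ t"
  proof -
    have "(\<Prod>j<t. (elt1 i0 m0) ^ f2 - (w ^ (G + g * j)) ^ f2) ^ h = (\<Prod>j<t. ((-1::'a) ^ R2 * (-1) ^ K))"
      unfolding prod_power_distrib using power_h_factor_12 assms by (intro prod.cong refl) auto
    thus ?thesis by simp
  qed
  show ?thesis using o p1 p2 unfolding diff_prod_nodes_elt1[OF assms] power_mult_distrib by simp
qed

lemma diff_prod_elt2_power_h: assumes "j0 < t" "m0 < f2"
  shows "(diff_prod nodes (elt2 j0 m0)) ^ h = ((-1) ^ R2) ^ (t - 1)"
proof -
  have o: "(of_nat f2 * (elt2 j0 m0) ^ (f2 - 1)) ^ h = 1" by (rule of_nat_mult_power_h[OF f2_dvd f2_pos elt2_power_h])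
  have p1: "(\<Prod>i<s. (elt2 j0 m0) ^ f1 - (w ^ (g * i)) ^ f1) ^ h = 1"
    unfolding prod_power_distrib using power_h_factor_21 assms by (intro prod.neutral) auto
  have p2: "(\<Prod>j\<in>{..<t}-{j0}. (elt2 j0 m0) ^ f2 - (w ^ (G + g * j)) ^ f2) ^ h = ((-1) ^ R2) ^ (t - 1)"
  proof -
    have "(\<Prod>j\<in>{..<t}-{j0}. (elt2 j0 m0) ^ f2 - (w ^ (G + g * j)) ^ f2) ^ h = (\<Prod>j\<in>{..<t}-{j0}. ((-1::'a) ^ R2))"
      unfolding prod_power_distrib using power_h_factor_22 assms by (intro prod.cong refl) auto
    thus ?thesis using assms by simp
  qed
  show ?thesis using o p1 p2 unfolding diff_prod_nodes_elt2[OF assms] power_mult_distrib by simp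
qed

lemma nodes_cases: "x \<in> nodes \<Longrightarrow> (\<exists>i m. i < s \<and> m < f1 \<and> x = elt1 i m) \<or> (\<exists>j m. j < t \<and> m < f2 \<and> x = elt2 j m)"
  by (auto simp: nodes_def cosets1_def cosets2_def coset1_def coset2_def)

lemma nodes_power_h: "x \<in> nodes \<Longrightarrow> x ^ h = 1"
  using nodes_cases elt1_power_h elt2_power_h by blast

lemma even_h: "even h"
  using h_eq r_minus_1_eq by simp

lemma square_quotient_if_power_h_eq: assumes "(lam::'a) ^ h = e" "P ^ h = e" "e \<noteq> 0" "lam \<noteq> 0"
  shows "\<exists>y. y ^ 2 = lam / P"
proof -
  have P0: "P \<noteq> 0" using assms(2,3) h_pos by (auto simp: power_0_left)
  have "(lam / P) ^ h = 1" using assms P0 by (simp add: power_divide)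
  moreover have "lam / P \<noteq> 0" using P0 assms(4) by simp
  ultimately show ?thesis using square_if_power_h_eq_1 by blast
qed

text \<open>Euler's criterion with \<open>h = (q-1)/2\<close>: all values \<open>diff_prod nodes x\<close> have the same quadratic
  character, so one multiplier \<open>lam\<close> (\<open>1\<close> or the nonsquare \<open>w\<close>) makes every quotient a square.\<close>

lemma nodes_square_condition:
  assumes eq: "((-1::'a) ^ R2 * (-1) ^ K) ^ t = ((-1) ^ R2) ^ (t - 1)"
  obtains lam where "lam \<noteq> 0" "\<forall>x\<in>nodes. \<exists>y. y ^ 2 = lam / diff_prod nodes x"
proof -
  define e :: 'a where "e = ((-1) ^ R2) ^ (t - 1)"
  have e_cases: "e = 1 \<or> e = -1" unfolding e_def power_mult[symmetric] by (rule neg_one_power_cases)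
  define lam where "lam = (if e = 1 then 1 else w)"
  have lam_h: "lam ^ h = e" using e_cases w_power_h by (auto simp: lam_def)
  have lam0: "lam \<noteq> 0" using w_nonzero by (simp add: lam_def)
  have "(diff_prod nodes x) ^ h = e" if "x \<in> nodes" for x
    using nodes_cases[OF that] diff_prod_elt1_power_h diff_prod_elt2_power_h eq unfolding e_def by auto
  hence "\<forall>x\<in>nodes. \<exists>y. y ^ 2 = lam / diff_prod nodes x"
    using square_quotient_if_power_h_eq[OF lam_h _ _ lam0] e_cases by fastforce
  with lam0 show ?thesis by (rule that)
qed

text \<open>Adjoining \<open>0\<close> multiplies \<open>diff_prod nodes x\<close> by \<open>x\<close>, a square, and gives the new point
  \<open>diff_prod\<close> value \<open>\<Prod>y\<in>nodes. -y\<close>, also a square since \<open>h\<close> is even.\<close>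

lemma extended_nodes_square_condition:
  assumes e1: "((-1::'a) ^ R2 * (-1) ^ K) ^ t = 1" and e2: "((-1::'a) ^ R2) ^ (t - 1) = 1"
  shows "\<forall>x\<in>insert 0 nodes. \<exists>y. y ^ 2 = 1 / diff_prod (insert 0 nodes) x"
proof
  fix x assume x: "x \<in> insert 0 nodes"
  have one: "(1::'a) ^ h = 1" by simp
  have "(diff_prod (insert 0 nodes) x) ^ h = 1"
  proof (cases "x = 0")
    case True
    hence "diff_prod (insert 0 nodes) x = (\<Prod>y\<in>nodes. - y)"
      using zero_notin_nodes by (simp add: diff_prod_def)
    also have "(\<Prod>y\<in>nodes. - y) ^ h = (\<Prod>y\<in>nodes. (- y) ^ h)"
      by (rule prod_power_distrib)
    also have "\<dots> = 1"
      by (intro prod.neutral ballI) (simp add: power_minus_even[OF even_h] nodes_power_h)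
    finally show ?thesis .
  next
    case False
    hence x_nodes: "x \<in> nodes" using x by simp
    have "insert 0 nodes - {x} = insert 0 (nodes - {x})" using False by auto
    hence "diff_prod (insert 0 nodes) x = x * diff_prod nodes x"
      using finite_nodes zero_notin_nodes by (simp add: diff_prod_def)
    thus ?thesis
      using nodes_cases[OF x_nodes] diff_prod_elt1_power_h diff_prod_elt2_power_h e1 e2
        nodes_power_h[OF x_nodes] by (auto simp: power_mult_distrib)
  qed
  thus "\<exists>y. y ^ 2 = 1 / diff_prod (insert 0 nodes) x"
    using square_quotient_if_power_h_eq[OF one _ one_neq_zero one_neq_zero] by simp
qed

lemma finite_extended_nodes: "finite (insert 0 nodes)"
  using finite_nodes by simp

lemma card_extended_nodes: "card (insert 0 nodes) = s * f1 + t * f2 + 1"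
  using finite_nodes zero_notin_nodes card_nodes by simp

lemma neg_one_power_R2_K: "((-1::'a) ^ R2 * (-1) ^ K) ^ t = (-1) ^ (t * R2 + t * K)"
  by (simp add: power_add power_mult_distrib flip: power_mult) (simp add: mult.commute)

lemma neg_one_power_R2: "((-1::'a) ^ R2) ^ (t - 1) = (-1) ^ ((t - 1) * R2)"
  by (simp flip: power_mult) (simp add: mult.commute)

lemma div_e2_eq: "t * e1 * (r + 1) div (2 * e2) = t * D1 * K"
proof -
  have "t * e1 * (r + 1) = (2 * e2) * (t * D1 * K)"
    unfolding e1_eq e2_eq r_plus_1_eq R2_eq by (simp add: algebra_simps)
  thus ?thesis using e2_pos by simp
qed

lemma even_t_D1_K_iff: "even (t * D1 * K) \<longleftrightarrow> even (t * K)"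
  using odd_D1 by simp

lemma mult_r_plus_1_div_2: "m * (r + 1) div 2 = m * R2"
  using r_plus_1_eq by simp

lemma mds_self_orthogonal_code_on_nodes:
  assumes par: "even (t * e1 * (r + 1) div (2 * e2) + (r + 1) div 2)"
    and k: "1 \<le> k" "2 * k \<le> s * f1 + t * f2"
  shows "\<exists>C :: (nat \<Rightarrow> 'a) set. nk_code (s * f1 + t * f2) k C \<and> is_MDS (s * f1 + t * f2) C
           \<and> self_orthogonal (s * f1 + t * f2) C"
proof -
  have "even (t * D1 * K + R2)"
    using par mult_r_plus_1_div_2[of 1] unfolding div_e2_eq by simp
  hence "even (t * R2 + t * K) = even ((t - 1) * R2)"
    using even_t_D1_K_iff by (cases t) (auto simp: even_add)
  hence "((-1::'a) ^ R2 * (-1) ^ K) ^ t = ((-1) ^ R2) ^ (t - 1)"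
    unfolding neg_one_power_R2_K neg_one_power_R2 by (rule neg_one_power_cong)
  then obtain lam :: 'a where "lam \<noteq> 0" "\<forall>x\<in>nodes. \<exists>y. y ^ 2 = lam / diff_prod nodes x"
    by (rule nodes_square_condition)
  from mds_self_orthogonal_code_exists[OF finite_nodes this] k show ?thesis
    unfolding card_nodes by blast
qed

lemma extended_nodes_square_condition_if_even:
  assumes "even (t * D1 * K + t * R2)" "even ((t - 1) * R2)"
  shows "\<forall>x\<in>insert 0 nodes. \<exists>y. y ^ 2 = 1 / diff_prod (insert 0 nodes) x"
proof (rule extended_nodes_square_condition)
  have "even (t * R2 + t * K)" using assms(1) even_t_D1_K_iff by (auto simp: even_add)
  thus "((-1::'a) ^ R2 * (-1) ^ K) ^ t = 1" unfolding neg_one_power_R2_K by simp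
  show "((-1::'a) ^ R2) ^ (t - 1) = 1" unfolding neg_one_power_R2 using assms(2) by simp
qed

lemma mds_self_orthogonal_code_on_extended_nodes:
  assumes par: "even (t * e1 * (r + 1) div (2 * e2) + t * (r + 1) div 2)"
      "even ((t - 1) * (r + 1) div 2)"
    and k: "1 \<le> k" "2 * k \<le> s * f1 + t * f2 + 1"
  shows "\<exists>C :: (nat \<Rightarrow> 'a) set. nk_code (s * f1 + t * f2 + 1) k C
           \<and> is_MDS (s * f1 + t * f2 + 1) C \<and> self_orthogonal (s * f1 + t * f2 + 1) C"
proof -
  have "even (t * D1 * K + t * R2)" "even ((t - 1) * R2)"
    using par unfolding div_e2_eq mult_r_plus_1_div_2 .
  from mds_self_orthogonal_code_exists[OF finite_extended_nodes one_neq_zero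
      extended_nodes_square_condition_if_even[OF this]] k
  show ?thesis unfolding card_extended_nodes by blast
qed

lemma mds_almost_self_dual_code_on_extended_nodes:
  assumes par: "even (t * (r + 1) * e1 div (2 * e2))" "even ((r + 1) div 2)"
    and n: "even (s * f1 + t * f2)" "0 < s * f1 + t * f2"
  shows "\<exists>C :: (nat \<Rightarrow> 'a) set. is_MDS (s * f1 + t * f2 + 1) C
           \<and> almost_self_dual (s * f1 + t * f2 + 1) C"
proof -
  have "t * (r + 1) * e1 div (2 * e2) = t * D1 * K"
    using div_e2_eq by (simp add: ac_simps)
  hence "even (t * D1 * K)" "even R2"
    using par mult_r_plus_1_div_2[of 1] by simp_all
  hence "even (t * D1 * K + t * R2)" "even ((t - 1) * R2)" by simp_all
  moreover have "odd (s * f1 + t * f2 + 1)" "3 \<le> s * f1 + t * f2 + 1" using n by presburger+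
  ultimately show ?thesis
    using mds_almost_self_dual_code_exists[OF finite_extended_nodes one_neq_zero
      extended_nodes_square_condition_if_even] unfolding card_extended_nodes by blast
qed

end

lemma coset_nodes_exist:
  fixes w :: "'a::{finite,field}" and q r e1 f1 e2 f2 l s t :: nat
  assumes card_UNIV: "card (UNIV :: 'a set) = q" and q_def: "q = r ^ 2"
    and r_pp: "prime_power r" and r_odd: "odd r"
    and pos: "e1 > 0" "e2 > 0"
    and fact1: "q - 1 = e1 * f1" and fact2: "q - 1 = e2 * f2"
    and l2: "l \<ge> 2"
    and e1_cong: "e1 mod 2 ^ (l + 1) = 2 ^ l mod 2 ^ (l + 1)" and e2_dvd: "2 ^ l dvd e2"
    and div1: "2 * e2 dvd e1 * (r + 1)" and div2: "e1 dvd e2 * (r - 1)"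
    and s_le: "s \<le> e1 div gcd e1 e2" and t_le: "t \<le> e2 div gcd e1 e2"
    and w: "w \<noteq> 0" "\<forall>x. x \<noteq> 0 \<longrightarrow> (\<exists>i. x = w ^ i)" "\<forall>n. w ^ n = 1 \<longleftrightarrow> (q - 1) dvd n"
  obtains g G D1 D2 K L R2 h c0 where "coset_nodes w q r e1 e2 f1 f2 g G D1 D2 K L R2 h c0 s t"
proof -
  define g where "g = gcd e1 e2"
  define D1 where "D1 = e1 div g"
  define D2 where "D2 = e2 div g"
  have r_ge_3: "r \<ge> 3" by (rule odd_prime_power_ge_3[OF r_pp r_odd])
  have odd_D1: "odd D1" using two_power_dvd_gcd(2)[OF e1_cong e2_dvd] by (simp add: D1_def g_def)
  have "2 ^ 2 dvd g"
    using two_power_dvd_gcd(1)[OF e1_cong e2_dvd] le_imp_power_dvd[OF l2] dvd_trans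
    unfolding g_def by blast
  then obtain G' where g_eq: "g = 2 * (2 * G')" by auto
  have "g > 0" using pos by (simp add: g_def)
  hence G'_pos: "G' > 0" using g_eq by simp
  obtain L where L: "r - 1 = 2 * D1 * L"
    using gcd_quotients_dvd(1)[OF pos odd_D1[unfolded D1_def g_def] r_odd div1 div2]
    unfolding D1_def g_def by blast
  obtain K where K: "r + 1 = 2 * D2 * K"
    using gcd_quotients_dvd(2)[OF pos odd_D1[unfolded D1_def g_def] r_odd div1 div2]
    unfolding D2_def g_def by blast
  obtain c0 where c0: "e2 * (r - 1) = e1 * c0" using div2 by blast
  have "q - 1 = (r - 1) * (r + 1)"
    using r_ge_3 unfolding q_def by (cases r) (simp_all add: power2_eq_square algebra_simps)
  hence q_minus_1: "q - 1 = 2 * ((r - 1) * (D2 * K))" unfolding K by simp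
  show ?thesis
  proof (rule that[of g "2 * G'" D1 D2 K L "D2 * K" "(r - 1) * (D2 * K)" c0], unfold_locales)
    show "e1 = g * D1" "e2 = g * D2" by (simp_all add: D1_def D2_def g_def)
  qed (use card_UNIV q_def r_pp w fact1 fact2 g_eq G'_pos K L q_minus_1 c0 odd_D1 r_ge_3 s_le t_le in
      \<open>auto simp: D1_def D2_def g_def\<close>)
qed

theorem theorem4:
  fixes q r e1 f1 e2 f2 l s t :: nat
  assumes field_size: "card (UNIV :: 'a set) = q"
    and q_def: "q = r ^ 2"
    and r_pp: "prime_power r" and r_odd: "odd r"
    and pos: "e1 > 0" "f1 > 0" "e2 > 0" "f2 > 0"
    and fact1: "q - 1 = e1 * f1" and fact2: "q - 1 = e2 * f2"
    and l2: "l \<ge> 2"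
    and e1_cong: "e1 mod 2 ^ (l + 1) = 2 ^ l mod 2 ^ (l + 1)"
    and e2_dvd: "2 ^ l dvd e2"
    and div1: "2 * e2 dvd e1 * (r + 1)"
    and div2: "e1 dvd e2 * (r - 1)"
    and s_rng: "1 \<le> s" "s \<le> e1 div gcd e1 e2"
    and t_rng: "1 \<le> t" "t \<le> e2 div gcd e1 e2"
  shows
    "(even (t * e1 * (r + 1) div (2 * e2) + (r + 1) div 2) \<and> even (s * f1 + t * f2) \<longrightarrow>
       (\<forall>k. 1 \<le> k \<and> k \<le> (s * f1 + t * f2) div 2 - 1 \<longrightarrow>
          (\<exists>C :: (nat \<Rightarrow> 'a::{finite,field}) set. nk_code (s * f1 + t * f2) k C
              \<and> is_MDS (s * f1 + t * f2) C \<and> self_orthogonal (s * f1 + t * f2) C)))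
     \<and> (even (t * (r + 1) * e1 div (2 * e2)) \<and> even ((r + 1) div 2) \<and> even (s * f1 + t * f2) \<longrightarrow>
       (\<exists>C :: (nat \<Rightarrow> 'a) set. is_MDS (s * f1 + t * f2 + 1) C
              \<and> almost_self_dual (s * f1 + t * f2 + 1) C))
     \<and> (even (t * e1 * (r + 1) div (2 * e2) + t * (r + 1) div 2) \<and> even ((t - 1) * (r + 1) div 2)
          \<and> odd (s * f1 + t * f2) \<longrightarrow>
       (\<forall>k. 1 \<le> k \<and> k \<le> (s * f1 + t * f2 + 1) div 2 - 1 \<longrightarrow>
          (\<exists>C :: (nat \<Rightarrow> 'a) set. nk_code (s * f1 + t * f2 + 1) k C
              \<and> is_MDS (s * f1 + t * f2 + 1) C \<and> self_orthogonal (s * f1 + t * f2 + 1) C)))"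
proof -
  obtain w :: 'a where w: "w \<noteq> 0" "\<forall>x. x \<noteq> 0 \<longrightarrow> (\<exists>i. x = w ^ i)"
      "\<forall>n. w ^ n = 1 \<longleftrightarrow> (q - 1) dvd n"
    using primitive_element_exists field_size by blast
  obtain g G D1 D2 K L R2 h c0 where "coset_nodes w q r e1 e2 f1 f2 g G D1 D2 K L R2 h c0 s t"
    by (rule coset_nodes_exist[OF field_size q_def r_pp r_odd pos(1,3) fact1 fact2 l2 e1_cong
          e2_dvd div1 div2 s_rng(2) t_rng(2) w])
  then interpret coset_nodes w q r e1 e2 f1 f2 g G D1 D2 K L R2 h c0 s t .
  have "0 < s * f1 + t * f2" using s_rng pos by simp
  thus ?thesis
    using mds_self_orthogonal_code_on_nodes mds_almost_self_dual_code_on_extended_nodes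
      mds_self_orthogonal_code_on_extended_nodes by auto
qed

end
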